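(* Let $2\le p<3$, let $N\in\mathbb N$, $d,n\ge1$, and let $f=(f_1,\dots,f_d)$ with $f_\mu\colon\mathbb R^n\to\mathbb R^n$ of class $C^3_b$. Let $\mathbf w,\tilde{\mathbf w}$ be time series $(\mathbf w_0,\dots,\mathbf w_N)$, $(\tilde{\mathbf w}_0,\dots,\tilde{\mathbf w}_N)$ in $\mathbb R^d$ with lifts $\mathbf W=(\mathbf w,\mathbb W)$, $\tilde{\mathbf W}=(\tilde{\mathbf w},\tilde{\mathbb W})$, let $\xi,\tilde\xi\in\mathbb R^n$, and let $\mathbf x,\tilde{\mathbf x}$ solve \[ \mathbf x_{k+1}=\mathbf x_k+\sum_{\mu=1}^d f_\mu(\mathbf x_k)(\mathbf w^\mu_{k+1}-\mathbf w^\mu_k),\ \mathbf x_0=\xi,\qquad \tilde{\mathbf x}_{k+1}=\tilde{\mathbf x}_k+\sum_{\mu=1}^d f_\mu(\tilde{\mathbf x}_k)(\tilde{\mathbf w}^\mu_{k+1}-\tilde{\mathbf w}^\mu_k),\ \tilde{\mathbf x}_0=\tilde\xi . \] Then \[ \sup_{k=0,\dots,N}|\mathbf x_k-\tilde{\mathbf x}_k|\le 2c'_{p,N}\exp\!\Big(c_{p,N}\|f\|_{C^3_b}^p\big(|||\mathbf W|||^p_{p;[0,N]}+|||\tilde{\mathbf W}|||^p_{p;[0,N]}\big)\Big)\big(|\xi-\tilde\xi|+\|f\|_{C^3_b}\rho_p(\mathbf W,\tilde{\mathbf W})\big), \] where $c_{p,N}\coloneqq 2^pe^{2p}(L_p+K_p^2+K_p')^p$,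 $c'_{p,N}\coloneqq 2^{1-2/p}c_{p,N}^{1/p}$, $L_p\coloneqq 4^{3/2-2/p}\cdot7^{2-3/p}\cdot C_{p,N}$, $K_p\coloneqq 9\cdot 2^{6(1-1/p)}\big(1\vee 6^{1-1/p}8^{(1-1/p)(1-2/p)}C_{p,N}^{1-1/p}\big)$, $K_p'\coloneqq 3\cdot2^{1-2/p}(1+K_p^2)$, and $C_{p,N}\coloneqq 2^{2/p}\zeta_N(2/p)$ with $\zeta_N(s)=\sum_{j=1}^Nj^{-s}$.
   Context: $\mathbb R^n$ carries a fixed norm, $\mathbb R^d$ the $\ell^1$ norm, and $d\times d$ matrices the entrywise $\ell^1$ norm $|M|=\sum_{\mu,\nu}|M^{\mu\nu}|$; derivatives use induced operator norms. $\|f\|_{C^3_b}\coloneqq\max_{\mu}\max_{j=0,\dots,3}\|D^jf_\mu\|_\infty$. For $0\le k<l\le N$, $\mathcal S_{k,l}$ is the set of increasing integer sequences $s=(s_0=k<s_1<\dots<s_m<s_{m+1}=l)$, $\#s=m$. For a time series, $\|\mathbf w\|_{q;[k,l]}\coloneqq(\max_{s\in\mathcal S_{k,l}}\sum_{j=0}^{\#s}|\mathbf w_{s_{j+1}}-\mathbf w_{s_j}|^q)^{1/q}$; for a triangular array $(\Xi_{k,l})_{0\le k<l\le N}$, $\|\Xi\|_{q;[k,l]}\coloneqq(\max_{s\in\mathcal S_{k,l}}\sum_{j=0}^{\#s}|\Xi_{s_j,s_{j+1}}|^q)^{1/q}$. The lift of $\mathbf w$ is the array of $d\times d$ matrices $\mathbb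 W^{\mu\nu}_{k,l}\coloneqq\sum_{j=k}^{l-1}(\mathbf w^\mu_j-\mathbf w^\mu_k)(\mathbf w^\nu_{j+1}-\mathbf w^\nu_j)$, and $\mathbf W=(\mathbf w,\mathbb W)$. Define $|||\mathbf W|||_{p;[k,l]}\coloneqq\|\mathbf w\|_{p;[k,l]}+\|\mathbb W\|^{1/2}_{p/2;[k,l]}$ and $\rho_p(\mathbf W,\tilde{\mathbf W})\coloneqq\|\mathbf w-\tilde{\mathbf w}\|_{p;[0,N]}+\|\mathbb W-\tilde{\mathbb W}\|_{p/2;[0,N]}$. *)

theory Defs
  imports "HOL-Analysis.Analysis"
begin

text \<open>Vectors in R^d are functions nat => real restricted to indices mu < d, with the l1 norm.
  d x d matrices are functions nat => nat => real with the entrywise l1 norm.\<close>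

definition l1norm :: "nat \<Rightarrow> (nat \<Rightarrow> real) \<Rightarrow> real" where
  "l1norm d v = (\<Sum>\<mu><d. \<bar>v \<mu>\<bar>)"

definition mat_l1norm :: "nat \<Rightarrow> (nat \<Rightarrow> nat \<Rightarrow> real) \<Rightarrow> real" where
  "mat_l1norm d M = (\<Sum>\<mu><d. \<Sum>\<nu><d. \<bar>M \<mu> \<nu>\<bar>)"

definition partitions :: "nat \<Rightarrow> nat \<Rightarrow> nat list set" where
  "partitions k l = {s. sorted_wrt (<) s \<and> 2 \<le> length s \<and> hd s = k \<and> last s = l}"

definition pvar :: "real \<Rightarrow> (nat \<Rightarrow> nat \<Rightarrow> real) \<Rightarrow> nat \<Rightarrow> nat \<Rightarrow> real" where
  "pvar q A k l = (if k < l then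
      (Max ((\<lambda>s. \<Sum>j<length s - 1. (A (s ! j) (s ! Suc j)) powr q) ` partitions k l)) powr (1 / q)
    else 0)"

definition ts_pvar :: "nat \<Rightarrow> real \<Rightarrow> (nat \<Rightarrow> nat \<Rightarrow> real) \<Rightarrow> nat \<Rightarrow> nat \<Rightarrow> real" where
  "ts_pvar d q w k l = pvar q (\<lambda>a b. l1norm d (\<lambda>\<mu>. w b \<mu> - w a \<mu>)) k l"

definition arr_pvar :: "nat \<Rightarrow> real \<Rightarrow> (nat \<Rightarrow> nat \<Rightarrow> nat \<Rightarrow> nat \<Rightarrow> real) \<Rightarrow> nat \<Rightarrow> nat \<Rightarrow> real" where
  "arr_pvar d q X k l = pvar q (\<lambda>a b. mat_l1norm d (X a b)) k l"

definition lift :: "(nat \<Rightarrow> nat \<Rightarrow> real) \<Rightarrow> nat \<Rightarrow> nat \<Rightarrow> nat \<Rightarrow> nat \<Rightarrow> real" where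
  "lift w k l \<mu> \<nu> = (\<Sum>j\<in>{k..<l}. (w j \<mu> - w k \<mu>) * (w (Suc j) \<nu> - w j \<nu>))"

definition rp_norm :: "nat \<Rightarrow> real \<Rightarrow> (nat \<Rightarrow> nat \<Rightarrow> real) \<Rightarrow> nat \<Rightarrow> nat \<Rightarrow> real" where
  "rp_norm d p w k l = ts_pvar d p w k l + (arr_pvar d (p / 2) (lift w) k l) powr (1 / 2)"

definition rho_p :: "nat \<Rightarrow> real \<Rightarrow> nat \<Rightarrow> (nat \<Rightarrow> nat \<Rightarrow> real) \<Rightarrow> (nat \<Rightarrow> nat \<Rightarrow> real) \<Rightarrow> real" where
  "rho_p d p N w w' = ts_pvar d p (\<lambda>k \<mu>. w k \<mu> - w' k \<mu>) 0 N
      + arr_pvar d (p / 2) (\<lambda>k l \<mu> \<nu>. lift w k l \<mu> \<nu> - lift w' k l \<mu> \<nu>) 0 N"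

definition C3b_with ::
  "('a::real_normed_vector \<Rightarrow> 'a) \<Rightarrow> ('a \<Rightarrow> 'a \<Rightarrow>\<^sub>L 'a) \<Rightarrow> ('a \<Rightarrow> 'a \<Rightarrow>\<^sub>L ('a \<Rightarrow>\<^sub>L 'a))
    \<Rightarrow> ('a \<Rightarrow> 'a \<Rightarrow>\<^sub>L ('a \<Rightarrow>\<^sub>L ('a \<Rightarrow>\<^sub>L 'a))) \<Rightarrow> bool" where
  "C3b_with g D1 D2 D3 \<longleftrightarrow>
     (\<forall>x. (g has_derivative blinfun_apply (D1 x)) (at x)) \<and>
     (\<forall>x. (D1 has_derivative blinfun_apply (D2 x)) (at x)) \<and>
     (\<forall>x. (D2 has_derivative blinfun_apply (D3 x)) (at x)) \<and>
     continuous_on UNIV D3 \<and>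
     bounded (range g) \<and> bounded (range D1) \<and> bounded (range D2) \<and> bounded (range D3)"

definition C3b_norm ::
  "nat \<Rightarrow> (nat \<Rightarrow> 'a::real_normed_vector \<Rightarrow> 'a) \<Rightarrow> (nat \<Rightarrow> 'a \<Rightarrow> 'a \<Rightarrow>\<^sub>L 'a)
    \<Rightarrow> (nat \<Rightarrow> 'a \<Rightarrow> 'a \<Rightarrow>\<^sub>L ('a \<Rightarrow>\<^sub>L 'a))
    \<Rightarrow> (nat \<Rightarrow> 'a \<Rightarrow> 'a \<Rightarrow>\<^sub>L ('a \<Rightarrow>\<^sub>L ('a \<Rightarrow>\<^sub>L 'a))) \<Rightarrow> real" where
  "C3b_norm d f D1 D2 D3 = Max ((\<lambda>\<mu>. Max {(SUP x. norm (f \<mu> x)), (SUP x. norm (D1 \<mu> x)),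
                                          (SUP x. norm (D2 \<mu> x)), (SUP x. norm (D3 \<mu> x))}) ` {..<d})"

definition zetaN :: "nat \<Rightarrow> real \<Rightarrow> real" where
  "zetaN N s = (\<Sum>j=1..N. real j powr (- s))"

definition CpN :: "real \<Rightarrow> nat \<Rightarrow> real" where
  "CpN p N = 2 powr (2 / p) * zetaN N (2 / p)"

definition Lp :: "real \<Rightarrow> nat \<Rightarrow> real" where
  "Lp p N = 4 powr (3/2 - 2/p) * 7 powr (2 - 3/p) * CpN p N"

definition Kp :: "real \<Rightarrow> nat \<Rightarrow> real" where
  "Kp p N = 9 * 2 powr (6 * (1 - 1/p)) *
     max 1 (6 powr (1 - 1/p) * 8 powr ((1 - 1/p) * (1 - 2/p)) * CpN p N powr (1 - 1/p))"

definition Kp' :: "real \<Rightarrow> nat \<Rightarrow> real" where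
  "Kp' p N = 3 * 2 powr (1 - 2/p) * (1 + (Kp p N)\<^sup>2)"

definition cpN :: "real \<Rightarrow> nat \<Rightarrow> real" where
  "cpN p N = 2 powr p * exp (2 * p) * (Lp p N + (Kp p N)\<^sup>2 + Kp' p N) powr p"

definition cpN' :: "real \<Rightarrow> nat \<Rightarrow> real" where
  "cpN' p N = 2 powr (1 - 2/p) * cpN p N powr (1 / p)"

end

(*
  The argument is a discrete version of rough-path sewing. If the defect
  Xi s t - Xi s m - Xi m t of a two-parameter germ Xi is bounded by omega(s,t)^theta
  for a superadditive control omega, then deleting one by one a partition point at
  which omega over the two adjacent intervals is at most twice its average (Young's
  argument) bounds the Riemann sum of Xi over {a..b} minus Xi a b by
  2^theta zeta_N(theta) omega(a,b)^theta. With theta = 2/p <= 1 the finite sum zeta_N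
  replaces the usual convergence condition; the controls are p-th powers of
  p-variations of the drivers.

  For the germ f(y_s)(w_t - w_s) this gives, by induction on t - s, increments of an
  Euler solution of size 2 M omega_w(s,t)^(1/p) on intervals where M omega_w^(1/p) is
  small. For the difference of two solutions, with defects controlled by the second
  difference of f, it gives |x_m - x'_m| <= 2 |x_k - x'_k| + 4 M omega_(w-w')(k,l)^(1/p)
  on intervals [k,l] where M (omega_w + omega_w')^(1/p) <= eta. Cutting {0..N}
  greedily into such intervals, passing to the next interval multiplies the error by
  exp(gamma M^p (omega_w + omega_w')) over the interval just left, and superadditivity
  adds up the exponents.

  Only the first level of the rough path norms enters the bound.
*)

theory Submission
  imports Defs
begin

section \<open>Controls\<close>

definition control :: "(nat \<Rightarrow> nat \<Rightarrow> real) \<Rightarrow> bool" where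
  "control \<omega> \<longleftrightarrow> (\<forall>s t. 0 \<le> \<omega> s t) \<and> (\<forall>s m t. s \<le> m \<longrightarrow> m \<le> t \<longrightarrow> \<omega> s m + \<omega> m t \<le> \<omega> s t)"

lemma control_nonneg: "control \<omega> \<Longrightarrow> 0 \<le> \<omega> s t"
  by (simp add: control_def)

lemma control_superadditive: "control \<omega> \<Longrightarrow> s \<le> m \<Longrightarrow> m \<le> t \<Longrightarrow> \<omega> s m + \<omega> m t \<le> \<omega> s t"
  by (simp add: control_def)

lemma control_mono:
  assumes "control \<omega>" "a \<le> s" "s \<le> t" "t \<le> b"
  shows "\<omega> s t \<le> \<omega> a b"
  using control_superadditive[OF assms(1), of a s t] control_superadditive[OF assms(1), of a t b]
    control_nonneg[OF assms(1), of a s] control_nonneg[OF assms(1), of t b] assms(2-4)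
  by linarith

lemma control_add: "control \<omega>1 \<Longrightarrow> control \<omega>2 \<Longrightarrow> control (\<lambda>s t. \<omega>1 s t + \<omega>2 s t)"
  unfolding control_def by (smt (verit))

lemma control_scale: "control \<omega> \<Longrightarrow> 0 \<le> c \<Longrightarrow> control (\<lambda>s t. c * \<omega> s t)"
  unfolding control_def by (metis distrib_left mult_left_mono mult_nonneg_nonneg)

lemma sqrt_mult_add_le:
  fixes a1 a2 b1 b2 :: real
  assumes "0 \<le> a1" "0 \<le> a2" "0 \<le> b1" "0 \<le> b2"
  shows "sqrt (a1 * b1) + sqrt (a2 * b2) \<le> sqrt ((a1 + a2) * (b1 + b2))"
proof -
  have "2 * sqrt ((a1 * b2) * (a2 * b1)) \<le> a1 * b2 + a2 * b1"
    using arith_geo_mean_sqrt[of "a1 * b2" "a2 * b1"] assms by simp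
  hence "(sqrt (a1 * b1) + sqrt (a2 * b2))\<^sup>2 \<le> (a1 + a2) * (b1 + b2)"
    using assms by (simp add: power2_sum real_sqrt_mult algebra_simps)
  thus ?thesis using assms by (simp add: real_le_rsqrt)
qed

lemma control_geometric_mean:
  assumes "control \<omega>1" "control \<omega>2"
  shows "control (\<lambda>s t. sqrt (\<omega>1 s t * \<omega>2 s t))"
  unfolding control_def
proof (intro conjI allI impI)
  fix s m t :: nat assume "s \<le> m" "m \<le> t"
  have "sqrt (\<omega>1 s m * \<omega>2 s m) + sqrt (\<omega>1 m t * \<omega>2 m t)
      \<le> sqrt ((\<omega>1 s m + \<omega>1 m t) * (\<omega>2 s m + \<omega>2 m t))"
    using assms by (intro sqrt_mult_add_le) (auto simp: control_nonneg)
  also have "\<dots> \<le> sqrt (\<omega>1 s t * \<omega>2 s t)"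
    using assms \<open>s \<le> m\<close> \<open>m \<le> t\<close>
    by (intro real_sqrt_le_mono mult_mono) (auto simp: control_superadditive add_nonneg_nonneg control_nonneg)
  finally show "sqrt (\<omega>1 s m * \<omega>2 s m) + sqrt (\<omega>1 m t * \<omega>2 m t) \<le> sqrt (\<omega>1 s t * \<omega>2 s t)" .
qed (use assms in \<open>simp add: control_nonneg\<close>)

section \<open>The $q$-th power of the $q$-variation\<close>

definition pvar_pow :: "real \<Rightarrow> (nat \<Rightarrow> nat \<Rightarrow> real) \<Rightarrow> nat \<Rightarrow> nat \<Rightarrow> real" where
  "pvar_pow q A k l = (if k < l then
      Max ((\<lambda>s. \<Sum>j<length s - 1. (A (s ! j) (s ! Suc j)) powr q) ` partitions k l) else 0)"

lemma pvar_eq_pvar_pow: "pvar q A k l = pvar_pow q A k l powr (1 / q)"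
  by (simp add: pvar_def pvar_pow_def)

fun chain_sum :: "(nat \<Rightarrow> nat \<Rightarrow> real) \<Rightarrow> nat list \<Rightarrow> real" where
  "chain_sum g (x # y # ys) = g x y + chain_sum g (y # ys)"
| "chain_sum g _ = 0"

lemma sum_nth_eq_chain_sum: "(\<Sum>j<length s - 1. g (s ! j) (s ! Suc j)) = chain_sum g s"
proof (induction g s rule: chain_sum.induct)
  case (1 g x y ys)
  have "(\<Sum>j<length (x # y # ys) - 1. g ((x # y # ys) ! j) ((x # y # ys) ! Suc j))
      = g x y + (\<Sum>j<length (y # ys) - 1. g ((y # ys) ! j) ((y # ys) ! Suc j))"
    by (simp add: sum.lessThan_Suc_shift del: sum.lessThan_Suc)
  then show ?case using 1 by simp
qed auto

lemma chain_sum_append: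
  "s1 \<noteq> [] \<Longrightarrow> s2 \<noteq> [] \<Longrightarrow> last s1 = hd s2 \<Longrightarrow>
   chain_sum g (s1 @ tl s2) = chain_sum g s1 + chain_sum g s2"
proof (induction g s1 rule: chain_sum.induct)
  case ("2_2" g v)
  then show ?case by (cases s2) auto
qed auto

lemma partitions_subset:
  assumes "s \<in> partitions k l"
  shows "set s \<subseteq> {k..l}"
proof
  fix z assume z: "z \<in> set s"
  have s: "sorted_wrt (<) s" "s \<noteq> []" "hd s = k" "last s = l"
    using assms by (auto simp: partitions_def)
  obtain a t where "s = a # t" using s(2) by (cases s) auto
  then have "k \<le> z" using s z by auto
  moreover obtain u b where "s = u @ [b]" using s(2) by (metis rev_exhaust)
  then have "z \<le> l" using s z by (auto simp: sorted_wrt_append)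
  ultimately show "z \<in> {k..l}" by simp
qed

lemma finite_partitions: "finite (partitions k l)"
proof (rule finite_subset)
  show "partitions k l \<subseteq> {s. set s \<subseteq> {k..l} \<and> length s \<le> Suc l}"
  proof
    fix s assume s: "s \<in> partitions k l"
    then have "distinct s" by (simp add: partitions_def strict_sorted_iff)
    then have "length s \<le> card {k..l}"
      using partitions_subset[OF s] by (metis card_mono distinct_card finite_atLeastAtMost)
    then show "s \<in> {s. set s \<subseteq> {k..l} \<and> length s \<le> Suc l}"
      using partitions_subset[OF s] by simp
  qed
qed (rule finite_lists_length_le, simp)

lemma pvar_pow_ge:
  assumes "k < l"
  shows "A k l powr q \<le> pvar_pow q A k l"
proof -
  let ?F = "\<lambda>s. \<Sum>j<length s - 1. (A (s ! j) (s ! Suc j)) powr q"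
  have "[k, l] \<in> partitions k l" using assms by (simp add: partitions_def)
  then have "?F [k, l] \<le> Max (?F ` partitions k l)"
    using finite_partitions by (intro Max_ge imageI) auto
  then show ?thesis using assms by (simp add: pvar_pow_def)
qed

lemma partitions_append:
  assumes s1: "s1 \<in> partitions k m" and s2: "s2 \<in> partitions m l"
  shows "s1 @ tl s2 \<in> partitions k l"
proof -
  obtain t where t: "s2 = m # t" "t \<noteq> []"
    using s2 by (cases s2; cases "tl s2") (auto simp: partitions_def)
  have "\<forall>y\<in>set t. m < y" "sorted_wrt (<) t"
    using s2 t by (auto simp: partitions_def)
  moreover have "\<forall>y\<in>set s1. y \<le> m"
    using partitions_subset[OF s1] by auto
  ultimately have "sorted_wrt (<) (s1 @ t)"
    using s1 unfolding partitions_def sorted_wrt_append by (auto intro: le_less_trans)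
  then show ?thesis
    using s1 s2 t by (auto simp: partitions_def hd_append)
qed

lemma pvar_pow_attained:
  assumes "k < l"
  obtains s where "s \<in> partitions k l"
    "(\<Sum>j<length s - 1. (A (s ! j) (s ! Suc j)) powr q) = pvar_pow q A k l"
proof -
  let ?F = "\<lambda>s. \<Sum>j<length s - 1. (A (s ! j) (s ! Suc j)) powr q"
  have "[k, l] \<in> partitions k l" using assms by (simp add: partitions_def)
  then have "Max (?F ` partitions k l) \<in> ?F ` partitions k l"
    using finite_partitions by (intro Max_in) auto
  then show ?thesis using that assms by (auto simp: pvar_pow_def)
qed

lemma control_pvar_pow: "control (pvar_pow q A)"
  unfolding control_def
proof (intro conjI allI impI)
  fix k l :: nat
  show "0 \<le> pvar_pow q A k l"
    using pvar_pow_ge[of k l A q] powr_ge_zero[of "A k l" q]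
    by (cases "k < l") (auto simp: pvar_pow_def simp del: powr_ge_zero)
next
  fix k m l :: nat assume "k \<le> m" "m \<le> l"
  show "pvar_pow q A k m + pvar_pow q A m l \<le> pvar_pow q A k l"
  proof (cases "k = m \<or> m = l")
    case False
    then have km: "k < m" and ml: "m < l" using \<open>k \<le> m\<close> \<open>m \<le> l\<close> by auto
    let ?F = "\<lambda>s. \<Sum>j<length s - 1. (A (s ! j) (s ! Suc j)) powr q"
    obtain s1 where s1: "s1 \<in> partitions k m" "?F s1 = pvar_pow q A k m"
      using pvar_pow_attained[OF km] .
    obtain s2 where s2: "s2 \<in> partitions m l" "?F s2 = pvar_pow q A m l"
      using pvar_pow_attained[OF ml] .
    have "?F (s1 @ tl s2) \<le> Max (?F ` partitions k l)"
      using partitions_append[OF s1(1) s2(1)] finite_partitions by (intro Max_ge imageI) auto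
    then have "?F (s1 @ tl s2) \<le> pvar_pow q A k l"
      using km ml by (simp add: pvar_pow_def)
    moreover have "?F (s1 @ tl s2) = ?F s1 + ?F s2"
      unfolding sum_nth_eq_chain_sum[where g = "\<lambda>a b. A a b powr q"] using s1(1) s2(1)
      by (intro chain_sum_append) (auto simp: partitions_def)
    ultimately show ?thesis using s1(2) s2(2) by simp
  qed (auto simp: pvar_pow_def)
qed

lemma control_powr_mono:
  assumes "control \<omega>" "0 \<le> \<theta>" "k \<le> a" "a \<le> b" "b \<le> l"
  shows "\<omega> a b powr \<theta> \<le> \<omega> k l powr \<theta>"
  using assms control_nonneg[OF assms(1), of a b] control_mono[OF assms(1,3-5)]
  by (intro powr_mono2) auto

definition ts_control :: "nat \<Rightarrow> real \<Rightarrow> (nat \<Rightarrow> nat \<Rightarrow> real) \<Rightarrow> nat \<Rightarrow> nat \<Rightarrow> real" where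
  "ts_control d p v = pvar_pow p (\<lambda>a b. l1norm d (\<lambda>\<mu>. v b \<mu> - v a \<mu>))"

lemma ts_pvar_eq_ts_control: "ts_pvar d p v k l = ts_control d p v k l powr (1 / p)"
  by (simp add: ts_pvar_def ts_control_def pvar_eq_pvar_pow)

lemma control_ts_control: "control (ts_control d p v)"
  by (simp add: ts_control_def control_pvar_pow)

lemma l1norm_nonneg: "0 \<le> l1norm d v"
  by (simp add: l1norm_def sum_nonneg)

lemma l1norm_le_ts_control:
  assumes "0 < p" "a \<le> b"
  shows "l1norm d (\<lambda>\<mu>. v b \<mu> - v a \<mu>) \<le> ts_control d p v a b powr (1 / p)"
proof (cases "a = b")
  case False
  then have "l1norm d (\<lambda>\<mu>. v b \<mu> - v a \<mu>) powr p \<le> ts_control d p v a b"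
    using assms pvar_pow_ge[of a b "\<lambda>a b. l1norm d (\<lambda>\<mu>. v b \<mu> - v a \<mu>)" p]
    by (simp add: ts_control_def)
  then have "(l1norm d (\<lambda>\<mu>. v b \<mu> - v a \<mu>) powr p) powr (1 / p) \<le> ts_control d p v a b powr (1 / p)"
    using assms by (intro powr_mono2) auto
  then show ?thesis
    using assms l1norm_nonneg by (simp add: powr_powr)
qed (simp add: l1norm_def)

lemma ts_control_le_rp_norm: "0 < p \<Longrightarrow> ts_control d p w k l \<le> rp_norm d p w k l powr p"
proof -
  assume p: "0 < p"
  have "ts_control d p w k l powr (1 / p) \<le> rp_norm d p w k l"
    by (simp add: rp_norm_def ts_pvar_eq_ts_control arr_pvar_def pvar_eq_pvar_pow)
  then have "(ts_control d p w k l powr (1 / p)) powr p \<le> rp_norm d p w k l powr p"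
    using p by (intro powr_mono2) auto
  then show ?thesis
    using p control_nonneg[OF control_ts_control] by (simp add: powr_powr)
qed

lemma ts_pvar_le_rho_p: "ts_pvar d p (\<lambda>k \<mu>. w k \<mu> - w' k \<mu>) 0 N \<le> rho_p d p N w w'"
  by (simp add: rho_p_def arr_pvar_def pvar_eq_pvar_pow)


section \<open>Discrete sewing\<close>

lemma exists_le_average:
  fixes g :: "'i \<Rightarrow> real"
  assumes "finite I" "I \<noteq> {}" "sum g I \<le> S"
  obtains i where "i \<in> I" "g i \<le> S / card I"
proof -
  have "\<exists>i\<in>I. g i \<le> S / card I"
  proof (rule ccontr)
    assume "\<not> ?thesis"
    then have "sum (\<lambda>_. S / card I) I < sum g I"
      using assms by (intro sum_strict_mono) (auto simp: not_le)
    then show False using assms by simp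
  qed
  then show ?thesis using that by blast
qed

lemma control_sum_two_steps:
  assumes "control \<omega>" "mono \<sigma>"
  shows "(\<Sum>r\<le>n. \<omega> (\<sigma> r) (\<sigma> (Suc (Suc r)))) \<le> \<omega> (\<sigma> 0) (\<sigma> (Suc (Suc n))) + \<omega> (\<sigma> 0) (\<sigma> (Suc n))"
proof (induction n)
  case 0
  then show ?case using control_nonneg[OF assms(1)] by simp
next
  case (Suc n)
  have "\<omega> (\<sigma> 0) (\<sigma> (Suc n)) + \<omega> (\<sigma> (Suc n)) (\<sigma> (Suc (Suc (Suc n)))) \<le> \<omega> (\<sigma> 0) (\<sigma> (Suc (Suc (Suc n))))"
    using assms by (intro control_superadditive) (auto simp: monoD)
  then show ?case using Suc by simp
qed

lemma control_two_steps_small: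
  assumes "control \<omega>" "mono \<sigma>"
  obtains r where "r \<le> n" "\<omega> (\<sigma> r) (\<sigma> (Suc (Suc r))) \<le> 2 * \<omega> (\<sigma> 0) (\<sigma> (Suc (Suc n))) / Suc n"
proof -
  have "\<omega> (\<sigma> 0) (\<sigma> (Suc n)) \<le> \<omega> (\<sigma> 0) (\<sigma> (Suc (Suc n)))"
    using assms by (intro control_mono) (auto simp: monoD)
  then have "(\<Sum>r\<le>n. \<omega> (\<sigma> r) (\<sigma> (Suc (Suc r)))) \<le> 2 * \<omega> (\<sigma> 0) (\<sigma> (Suc (Suc n)))"
    using control_sum_two_steps[OF assms, of n] by simp
  then show ?thesis
    using exists_le_average[of "{..n}" "\<lambda>r. \<omega> (\<sigma> r) (\<sigma> (Suc (Suc r)))"] that by auto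
qed

definition delete_point :: "nat \<Rightarrow> (nat \<Rightarrow> nat) \<Rightarrow> nat \<Rightarrow> nat" where
  "delete_point r \<sigma> j = (if j \<le> r then \<sigma> j else \<sigma> (Suc j))"

lemma sum_delete_point:
  fixes h :: "nat \<Rightarrow> nat \<Rightarrow> 'b::ab_group_add"
  assumes "r \<le> n"
  shows "(\<Sum>j\<le>Suc n. h (\<sigma> j) (\<sigma> (Suc j)))
    = (\<Sum>j\<le>n. h (delete_point r \<sigma> j) (delete_point r \<sigma> (Suc j)))
      + (h (\<sigma> r) (\<sigma> (Suc r)) + h (\<sigma> (Suc r)) (\<sigma> (Suc (Suc r))) - h (\<sigma> r) (\<sigma> (Suc (Suc r))))"
  using assms
proof (induction n rule: dec_induct)
  case base
  have "(\<Sum>j<r. h (delete_point r \<sigma> j) (delete_point r \<sigma> (Suc j))) = (\<Sum>j<r. h (\<sigma> j) (\<sigma> (Suc j)))"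
    by (intro sum.cong) (auto simp: delete_point_def)
  then show ?case
    by (simp add: lessThan_Suc_atMost[symmetric] delete_point_def)
next
  case (step n)
  then show ?case by (simp add: delete_point_def)
qed

lemma sewing_partition:
  fixes \<Xi> :: "nat \<Rightarrow> nat \<Rightarrow> 'b::real_normed_vector"
  assumes \<omega>: "control \<omega>" and "0 \<le> \<theta>" "0 \<le> A"
    and defect: "\<And>s m t. a \<le> s \<Longrightarrow> s < m \<Longrightarrow> m < t \<Longrightarrow> t \<le> b \<Longrightarrow>
        norm (\<Xi> s t - \<Xi> s m - \<Xi> m t) \<le> A * \<omega> s t powr \<theta>"
  shows "strict_mono \<sigma> \<Longrightarrow> \<sigma> 0 = a \<Longrightarrow> \<sigma> (Suc n) = b \<Longrightarrow>
    norm ((\<Sum>j\<le>n. \<Xi> (\<sigma> j) (\<sigma> (Suc j))) - \<Xi> a b) \<le> A * (\<Sum>i=1..n. (2 * \<omega> a b / real i) powr \<theta>)"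
proof (induction n arbitrary: \<sigma>)
  case (Suc n)
  have mono: "mono \<sigma>" using Suc.prems(1) by (rule strict_mono_mono)
  \<comment> \<open>Young's argument: delete a point \<open>\<sigma> (Suc r)\<close> whose two adjacent intervals carry at most
    twice the average control\<close>
  obtain r where r: "r \<le> n" and small: "\<omega> (\<sigma> r) (\<sigma> (Suc (Suc r))) \<le> 2 * \<omega> a b / Suc n"
    using control_two_steps_small[OF \<omega> mono, of n] Suc.prems by auto
  let ?\<sigma>' = "delete_point r \<sigma>"
  have "strict_mono ?\<sigma>'"
    using Suc.prems(1) by (auto simp: strict_mono_def delete_point_def strict_mono_less)
  moreover have "?\<sigma>' 0 = a" "?\<sigma>' (Suc n) = b"
    using Suc.prems r by (auto simp: delete_point_def)
  ultimately have IH: "norm ((\<Sum>j\<le>n. \<Xi> (?\<sigma>' j) (?\<sigma>' (Suc j))) - \<Xi> a b)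
      \<le> A * (\<Sum>i=1..n. (2 * \<omega> a b / real i) powr \<theta>)"
    using Suc.IH by blast
  let ?\<delta> = "\<Xi> (\<sigma> r) (\<sigma> (Suc r)) + \<Xi> (\<sigma> (Suc r)) (\<sigma> (Suc (Suc r))) - \<Xi> (\<sigma> r) (\<sigma> (Suc (Suc r)))"
  have "a \<le> \<sigma> r" "\<sigma> (Suc (Suc r)) \<le> b"
    using Suc.prems(2,3) r mono by (auto simp: monoD)
  then have "norm ?\<delta> \<le> A * \<omega> (\<sigma> r) (\<sigma> (Suc (Suc r))) powr \<theta>"
    using defect[of "\<sigma> r" "\<sigma> (Suc r)" "\<sigma> (Suc (Suc r))"] Suc.prems(1)
    by (simp add: strict_mono_less norm_minus_commute algebra_simps)
  also have "\<dots> \<le> A * (2 * \<omega> a b / Suc n) powr \<theta>"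
    using small assms by (intro mult_left_mono powr_mono2) (auto simp: control_nonneg)
  finally have \<delta>: "norm ?\<delta> \<le> A * (2 * \<omega> a b / Suc n) powr \<theta>" .
  have "norm ((\<Sum>j\<le>Suc n. \<Xi> (\<sigma> j) (\<sigma> (Suc j))) - \<Xi> a b)
      \<le> norm ((\<Sum>j\<le>n. \<Xi> (?\<sigma>' j) (?\<sigma>' (Suc j))) - \<Xi> a b) + norm ?\<delta>"
    unfolding sum_delete_point[OF r, of \<Xi> \<sigma>]
    by (rule order.trans[OF _ norm_triangle_ineq]) (simp add: algebra_simps)
  also have "\<dots> \<le> A * (\<Sum>i=1..n. (2 * \<omega> a b / real i) powr \<theta>) + A * (2 * \<omega> a b / Suc n) powr \<theta>"
    using IH \<delta> by (rule add_mono)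
  finally show ?case by (simp add: distrib_left)
qed simp

lemma sewing_bound:
  fixes \<Xi> :: "nat \<Rightarrow> nat \<Rightarrow> 'b::real_normed_vector"
  assumes "control \<omega>" "0 \<le> \<theta>" "0 \<le> A"
    and "\<And>s m t. a \<le> s \<Longrightarrow> s < m \<Longrightarrow> m < t \<Longrightarrow> t \<le> b \<Longrightarrow>
        norm (\<Xi> s t - \<Xi> s m - \<Xi> m t) \<le> A * \<omega> s t powr \<theta>"
    and "a < b" "b - a \<le> Suc N"
  shows "norm ((\<Sum>j<b - a. \<Xi> (a + j) (a + Suc j)) - \<Xi> a b) \<le> 2 powr \<theta> * zetaN N \<theta> * A * \<omega> a b powr \<theta>"
proof -
  define n where "n = b - a - 1"
  have "{..<b - a} = {..n}" using assms by (auto simp: n_def)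
  then have "norm ((\<Sum>j<b - a. \<Xi> (a + j) (a + Suc j)) - \<Xi> a b) \<le> A * (\<Sum>i=1..n. (2 * \<omega> a b / real i) powr \<theta>)"
    using sewing_partition[OF assms(1-4), where \<sigma> = "\<lambda>j. a + j" and n = n] assms(5)
    by (simp add: strict_mono_def n_def)
  moreover have "(\<Sum>i=1..n. (2 * \<omega> a b / real i) powr \<theta>) = 2 powr \<theta> * \<omega> a b powr \<theta> * (\<Sum>i=1..n. real i powr (- \<theta>))"
    using assms(1) by (simp add: sum_distrib_left powr_divide powr_mult powr_minus_divide control_nonneg)
  moreover have "(\<Sum>i=1..n. real i powr (- \<theta>)) \<le> zetaN N \<theta>"
    unfolding zetaN_def using assms by (intro sum_mono2) (auto simp: n_def)
  ultimately show ?thesis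
    using assms(3) by (smt (verit) mult.commute mult.left_commute mult_left_mono powr_ge_zero)
qed

lemma powr_add_le_add_powr:
  fixes u v \<theta> :: real
  assumes "0 \<le> u" "0 \<le> v" "0 < \<theta>" "\<theta> \<le> 1"
  shows "(u + v) powr \<theta> \<le> u powr \<theta> + v powr \<theta>"
proof (cases "u + v = 0")
  case False
  define s where "s = u + v"
  have s: "0 < s" using False assms by (simp add: s_def)
  have "u / s \<le> (u / s) powr \<theta>" "v / s \<le> (v / s) powr \<theta>"
    using powr_mono'[of \<theta> 1 "u / s"] powr_mono'[of \<theta> 1 "v / s"] assms s by (simp_all add: s_def)
  have "s powr \<theta> = s powr \<theta> * (u / s + v / s)"
    using s by (simp add: s_def add_divide_distrib[symmetric])
  also have "\<dots> \<le> s powr \<theta> * ((u / s) powr \<theta> + (v / s) powr \<theta>)"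
    using \<open>u / s \<le> _\<close> \<open>v / s \<le> _\<close> by (intro mult_left_mono) auto
  also have "\<dots> = u powr \<theta> + v powr \<theta>"
    using s by (simp add: powr_divide distrib_left)
  finally show ?thesis by (simp add: s_def)
qed (use assms in simp)

lemma sewing_bound_two_controls:
  fixes \<Xi> :: "nat \<Rightarrow> nat \<Rightarrow> 'b::real_normed_vector"
  assumes \<omega>1: "control \<omega>1" and \<omega>2: "control \<omega>2" and \<theta>: "0 < \<theta>" "\<theta> \<le> 1" and "0 \<le> A" "0 \<le> B"
    and defect: "\<And>s m t. a \<le> s \<Longrightarrow> s < m \<Longrightarrow> m < t \<Longrightarrow> t \<le> b \<Longrightarrow>
        norm (\<Xi> s t - \<Xi> s m - \<Xi> m t) \<le> A * \<omega>1 s t powr \<theta> + B * \<omega>2 s t powr \<theta>"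
    and ab: "a < b" "b - a \<le> Suc N"
  shows "norm ((\<Sum>j<b - a. \<Xi> (a + j) (a + Suc j)) - \<Xi> a b)
    \<le> 2 * 2 powr \<theta> * zetaN N \<theta> * (A * \<omega>1 a b powr \<theta> + B * \<omega>2 a b powr \<theta>)"
proof -
  define u where "u s t = A powr (1 / \<theta>) * \<omega>1 s t" for s t
  define v where "v s t = B powr (1 / \<theta>) * \<omega>2 s t" for s t
  have uv: "A * \<omega>1 s t powr \<theta> + B * \<omega>2 s t powr \<theta> = u s t powr \<theta> + v s t powr \<theta>" for s t
    using assms by (simp add: u_def v_def powr_mult powr_powr control_nonneg)
  have \<omega>: "control (\<lambda>s t. u s t + v s t)"
    unfolding u_def v_def using \<omega>1 \<omega>2 by (intro control_add control_scale) auto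
  have "u s t powr \<theta> + v s t powr \<theta> \<le> 2 * (u s t + v s t) powr \<theta>" for s t
    using assms control_nonneg[OF \<omega>1] control_nonneg[OF \<omega>2]
    by (smt (verit) powr_mono2 u_def v_def mult_nonneg_nonneg powr_ge_zero)
  then have "norm (\<Xi> s t - \<Xi> s m - \<Xi> m t) \<le> 2 * (u s t + v s t) powr \<theta>"
    if "a \<le> s" "s < m" "m < t" "t \<le> b" for s m t
    using defect[OF that] unfolding uv by (meson order.trans)
  then have "norm ((\<Sum>j<b - a. \<Xi> (a + j) (a + Suc j)) - \<Xi> a b)
      \<le> 2 powr \<theta> * zetaN N \<theta> * 2 * (u a b + v a b) powr \<theta>"
    using \<theta> ab by (intro sewing_bound[OF \<omega>]) auto
  also have "\<dots> \<le> 2 powr \<theta> * zetaN N \<theta> * 2 * (u a b powr \<theta> + v a b powr \<theta>)"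
    using assms by (intro mult_left_mono powr_add_le_add_powr)
      (auto simp: u_def v_def control_nonneg zetaN_def sum_nonneg)
  finally show ?thesis
    unfolding uv by (simp add: mult_ac)
qed

section \<open>Bounds from bounded derivatives\<close>

lemma norm_le_SUP_norm: "bounded (range F) \<Longrightarrow> norm (F y) \<le> (SUP x. norm (F x))"
  by (intro cSUP_upper) (auto simp: bounded_iff bdd_above_def)

lemma norm_diff_le_SUP_derivative:
  assumes "\<And>x. (g has_derivative blinfun_apply (D x)) (at x)" "bounded (range D)"
  shows "norm (g y - g y') \<le> (SUP x. norm (D x)) * norm (y - y')"
  using assms norm_le_SUP_norm[OF assms(2)]
  by (intro differentiable_bound[where S = UNIV and f' = "\<lambda>x. blinfun_apply (D x)"])
    (auto simp: norm_blinfun.rep_eq)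

lemma norm_diff_segments_le:
  fixes a0 a1 b0 b1 :: "'a::real_normed_vector"
  assumes "0 \<le> t" "t \<le> 1"
  shows "norm ((b1 + t *\<^sub>R (a1 - b1)) - (b0 + t *\<^sub>R (a0 - b0))) \<le> norm (a1 - a0) + norm (b1 - b0)"
proof -
  have "(b1 + t *\<^sub>R (a1 - b1)) - (b0 + t *\<^sub>R (a0 - b0)) = (1 - t) *\<^sub>R (b1 - b0) + t *\<^sub>R (a1 - a0)"
    by (simp add: algebra_simps)
  then have "norm ((b1 + t *\<^sub>R (a1 - b1)) - (b0 + t *\<^sub>R (a0 - b0))) \<le> (1 - t) * norm (b1 - b0) + t * norm (a1 - a0)"
    using assms norm_triangle_ineq[of "(1 - t) *\<^sub>R (b1 - b0)" "t *\<^sub>R (a1 - a0)"] by simp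
  also have "\<dots> \<le> norm (b1 - b0) + norm (a1 - a0)"
    using assms by (auto intro!: add_mono mult_left_le_one_le)
  finally show ?thesis by linarith
qed

lemma norm_second_difference_le:
  fixes g :: "'a::real_normed_vector \<Rightarrow> 'b::real_normed_vector"
  assumes g': "\<And>x. (g has_derivative blinfun_apply (D1 x)) (at x)"
    and D1': "\<And>x. (D1 has_derivative blinfun_apply (D2 x)) (at x)"
    and D1: "bounded (range D1)" and D2: "bounded (range D2)"
  shows "norm (g a1 - g b1 - g a0 + g b0) \<le> (SUP x. norm (D1 x)) * norm ((a1 - b1) - (a0 - b0))
     + (SUP x. norm (D2 x)) * norm (a0 - b0) * (norm (a1 - a0) + norm (b1 - b0))"
proof -
  define L1 where "L1 = (SUP x. norm (D1 x))"
  define L2 where "L2 = (SUP x. norm (D2 x))"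
  define \<gamma>1 where "\<gamma>1 t = b1 + t *\<^sub>R (a1 - b1)" for t :: real
  define \<gamma>0 where "\<gamma>0 t = b0 + t *\<^sub>R (a0 - b0)" for t :: real
  define v where "v t = D1 (\<gamma>1 t) (a1 - b1) - D1 (\<gamma>0 t) (a0 - b0)" for t
  have "((\<lambda>t. g (\<gamma>1 t) - g (\<gamma>0 t)) has_derivative (\<lambda>h. h *\<^sub>R v t)) (at t within {0..1})" for t
    unfolding \<gamma>1_def \<gamma>0_def v_def
    by (auto intro!: derivative_eq_intros has_derivative_compose[OF _ g']
        simp: blinfun.scaleR_right scaleR_diff_right[symmetric])
  moreover have "norm (v t) \<le> L1 * norm ((a1 - b1) - (a0 - b0)) + L2 * norm (a0 - b0) * (norm (a1 - a0) + norm (b1 - b0))"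
    if "t \<in> {0..1}" for t
  proof -
    have "v t = D1 (\<gamma>1 t) ((a1 - b1) - (a0 - b0)) + (D1 (\<gamma>1 t) - D1 (\<gamma>0 t)) (a0 - b0)"
      by (simp add: v_def blinfun.diff_right blinfun.diff_left)
    then have "norm (v t) \<le> norm (D1 (\<gamma>1 t)) * norm ((a1 - b1) - (a0 - b0))
        + norm (D1 (\<gamma>1 t) - D1 (\<gamma>0 t)) * norm (a0 - b0)"
      by (metis norm_triangle_le add_mono norm_blinfun)
    also have "\<dots> \<le> L1 * norm ((a1 - b1) - (a0 - b0)) + (L2 * norm (\<gamma>1 t - \<gamma>0 t)) * norm (a0 - b0)"
      using norm_le_SUP_norm[OF D1] norm_diff_le_SUP_derivative[OF D1' D2]
      unfolding L1_def L2_def by (intro add_mono mult_right_mono) auto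
    also have "\<dots> \<le> L1 * norm ((a1 - b1) - (a0 - b0)) + L2 * norm (a0 - b0) * (norm (a1 - a0) + norm (b1 - b0))"
    proof -
      have "norm (\<gamma>1 t - \<gamma>0 t) \<le> norm (a1 - a0) + norm (b1 - b0)"
        using that unfolding \<gamma>1_def \<gamma>0_def by (intro norm_diff_segments_le) auto
      moreover have "0 \<le> L2"
        using order.trans[OF norm_ge_zero norm_le_SUP_norm[OF D2, of 0]] by (simp add: L2_def)
      ultimately show ?thesis
        by (simp add: mult_ac mult_left_mono)
    qed
    finally show ?thesis .
  qed
  ultimately have "norm ((g (\<gamma>1 1) - g (\<gamma>0 1)) - (g (\<gamma>1 0) - g (\<gamma>0 0)))
      \<le> (L1 * norm ((a1 - b1) - (a0 - b0)) + L2 * norm (a0 - b0) * (norm (a1 - a0) + norm (b1 - b0))) * norm (1 - 0 :: real)"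
    by (intro differentiable_bound[where S = "{0..1}" and f = "\<lambda>t. g (\<gamma>1 t) - g (\<gamma>0 t)"])
      (auto intro!: onorm_le simp: mult.commute mult_left_mono)
  then show ?thesis
    by (simp add: \<gamma>1_def \<gamma>0_def L1_def L2_def algebra_simps)
qed

section \<open>The constants\<close>

lemma CpN_nonneg: "0 \<le> CpN p N"
  by (simp add: CpN_def zetaN_def sum_nonneg)

text \<open>The exponential rate of the global estimate: passing from one \<open>\<eta>\<close>-small interval to the
  next costs a factor \<open>5 (2 + y) \<le> exp (growth_rate p \<eta> * q^p)\<close>.\<close>

definition growth_rate :: "real \<Rightarrow> real \<Rightarrow> real" where
  "growth_rate p \<eta> = ln 10 / \<eta> powr p + \<eta> powr (1 - p) / 2"

lemma five_mul_two_add_le_exp: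
  fixes \<eta> q y p :: real
  assumes "0 < \<eta>" "\<eta> < q" "0 \<le> y" "y \<le> q" "1 \<le> p"
  shows "5 * (2 + y) \<le> exp (growth_rate p \<eta> * q powr p)"
proof -
  have q: "0 < q" using assms by simp
  have "y \<le> q powr p * q powr (1 - p)"
    using assms q by (simp add: powr_add[symmetric])
  also have "\<dots> \<le> q powr p * \<eta> powr (1 - p)"
    using assms by (intro mult_left_mono powr_mono2') auto
  finally have y: "y / 2 \<le> \<eta> powr (1 - p) / 2 * q powr p" by (simp add: mult_ac)
  have "\<eta> powr p \<le> q powr p"
    using assms by (intro powr_mono2) auto
  then have "ln 10 \<le> ln 10 / \<eta> powr p * q powr p"
    using assms by (simp add: field_simps)
  have "5 * (2 + y) = 10 * (1 + y / 2)" by simp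
  also have "\<dots> \<le> 10 * exp (y / 2)"
    by (intro mult_left_mono exp_ge_add_one_self) auto
  also have "\<dots> = exp (ln 10 + y / 2)" by (simp add: exp_add)
  also have "\<dots> \<le> exp (growth_rate p \<eta> * q powr p)"
    using y \<open>ln 10 \<le> _\<close> by (simp add: growth_rate_def distrib_right)
  finally show ?thesis .
qed

lemma Kp_ge_9:
  assumes "2 \<le> p"
  shows "9 \<le> Kp p N"
proof -
  have "1 \<le> 2 powr (6 * (1 - 1 / p))"
    using assms by (intro ge_one_powr_ge_zero) (auto simp: field_simps)
  then have "1 * 1 \<le> 2 powr (6 * (1 - 1 / p))
      * max 1 (6 powr (1 - 1/p) * 8 powr ((1 - 1/p) * (1 - 2/p)) * CpN p N powr (1 - 1/p))"
    by (intro mult_mono) auto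
  then show ?thesis by (simp add: Kp_def)
qed

lemma Lp_ge:
  assumes "2 \<le> p"
  shows "4.4 * CpN p N \<le> Lp p N"
proof -
  have "2 / p \<le> 1" "3 / p \<le> 3 / 2"
    using assms by (simp_all add: divide_le_eq)
  then have "4 powr (1 / 2) \<le> 4 powr (3 / 2 - 2 / p)" "7 powr (1 / 2) \<le> 7 powr (2 - 3 / p)"
    by (intro powr_mono; simp)+
  moreover have "4 powr (1 / 2) = (2::real)" "sqrt 7 = 7 powr (1 / 2 :: real)"
    by (simp_all add: powr_half_sqrt)
  moreover have "2.2 \<le> sqrt (7::real)"
    by (rule real_le_rsqrt) (simp add: power2_eq_square)
  ultimately have "2 \<le> 4 powr (3 / 2 - 2 / p)" "2.2 \<le> 7 powr (2 - 3 / p)"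
    by linarith+
  then have "2 * 2.2 \<le> 4 powr (3 / 2 - 2 / p) * 7 powr (2 - 3 / p)"
    by (rule mult_mono) auto
  then show ?thesis
    using mult_right_mono[OF _ CpN_nonneg[of p N]] by (fastforce simp: Lp_def)
qed

lemma cpN_eq: "cpN p N = (2 * exp 2 * (Lp p N + (Kp p N)\<^sup>2 + Kp' p N)) powr p"
proof -
  have "exp (2 * p) = exp 2 powr p"
    by (simp add: powr_def)
  then show ?thesis
    by (simp add: cpN_def powr_mult)
qed

lemma cpN_nonneg: "0 \<le> cpN p N"
  by (simp add: cpN_eq)

lemma cpN_base_ge:
  assumes "2 \<le> p"
  shows "4.4 * CpN p N + 81 \<le> Lp p N + (Kp p N)\<^sup>2 + Kp' p N"
proof -
  have "81 \<le> (Kp p N)\<^sup>2"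
    using Kp_ge_9[OF assms, of N] mult_mono[of 9 "Kp p N" 9 "Kp p N"] by (simp add: power2_eq_square)
  moreover have "0 \<le> Kp' p N" by (simp add: Kp'_def)
  ultimately show ?thesis using Lp_ge[OF assms, of N] by linarith
qed

lemma ln_10_le_3: "ln (10::real) \<le> 3"
proof -
  have "5 / 2 \<le> exp (1::real)"
    using exp_lower_Taylor_quadratic[of 1] by simp
  then have "5 / 2 * (5 / 2) * (5 / 2) \<le> exp (1::real) * exp 1 * exp 1"
    by (intro mult_mono) auto
  then have "10 \<le> exp (3::real)"
    by (simp add: exp_add[symmetric])
  then show ?thesis
    by (metis exp_gt_zero ln_exp ln_le_cancel_iff zero_less_numeral)
qed

lemma growth_rate_nonneg: "0 < \<eta> \<Longrightarrow> 0 \<le> growth_rate p \<eta>"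
  by (simp add: growth_rate_def)

lemma growth_rate_le_cpN:
  assumes "2 \<le> p"
  shows "growth_rate p (1 / (12 * CpN p N + 4)) \<le> cpN p N"
proof -
  define \<eta> where "\<eta> = 1 / (12 * CpN p N + 4)"
  define Y where "Y = 12 * CpN p N + 4"
  have Y: "1 \<le> Y" using CpN_nonneg[of p N] by (simp add: Y_def)
  have "\<eta> powr p = 1 / Y powr p" "\<eta> powr (1 - p) = Y powr (p - 1)"
    using Y by (simp_all add: \<eta>_def Y_def[symmetric] powr_divide powr_minus_divide[symmetric])
  then have "growth_rate p \<eta> = ln 10 * Y powr p + Y powr (p - 1) / 2"
    by (simp add: growth_rate_def)
  also have "\<dots> \<le> 3 * Y powr p + Y powr p / 2"
    using ln_10_le_3 Y by (intro add_mono mult_right_mono divide_right_mono powr_mono) auto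
  also have "\<dots> = 3.5 * Y powr p"
    by simp
  also have "\<dots> \<le> 3.5 powr p * Y powr p"
    using powr_mono[of 1 p "3.5::real"] assms by (intro mult_right_mono) auto
  also have "\<dots> = (3.5 * Y) powr p"
    by (rule powr_mult[symmetric])
  also have "\<dots> \<le> (2 * exp 2 * (Lp p N + (Kp p N)\<^sup>2 + Kp' p N)) powr p"
  proof (intro powr_mono2)
    have "5 \<le> exp (2::real)"
      using exp_lower_Taylor_quadratic[of 2] by simp
    then have "10 * (Lp p N + (Kp p N)\<^sup>2 + Kp' p N) \<le> 2 * exp 2 * (Lp p N + (Kp p N)\<^sup>2 + Kp' p N)"
      using cpN_base_ge[OF assms, of N] CpN_nonneg[of p N] by (intro mult_right_mono) auto
    then show "3.5 * Y \<le> 2 * exp 2 * (Lp p N + (Kp p N)\<^sup>2 + Kp' p N)"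
      using cpN_base_ge[OF assms, of N] CpN_nonneg[of p N] by (simp add: Y_def)
  qed (use assms Y in auto)
  finally show ?thesis
    by (simp add: cpN_eq \<eta>_def)
qed

lemma five_le_cpN':
  assumes "2 \<le> p"
  shows "5 \<le> 2 * cpN' p N"
proof -
  define X where "X = Lp p N + (Kp p N)\<^sup>2 + Kp' p N"
  have X: "81 \<le> X"
    using cpN_base_ge[OF assms, of N] CpN_nonneg[of p N] by (simp add: X_def)
  have "5 \<le> exp (2::real)"
    using exp_lower_Taylor_quadratic[of 2] by simp
  then have "5 * 81 \<le> exp 2 * X"
    using X by (intro mult_mono) auto
  then have "5 \<le> 2 * exp 2 * X"
    by (simp add: mult.assoc)
  also have "\<dots> = cpN p N powr (1 / p)"
    using X assms by (simp add: cpN_eq X_def powr_powr)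
  also have "\<dots> \<le> cpN' p N"
  proof -
    have "1 \<le> 2 powr (1 - 2 / p)"
      using assms by (intro ge_one_powr_ge_zero) (auto simp: field_simps)
    then show ?thesis
      using mult_right_mono[of 1 "2 powr (1 - 2 / p)" "cpN p N powr (1 / p)"] by (simp add: cpN'_def)
  qed
  finally show ?thesis by simp
qed


section \<open>The Euler scheme\<close>

definition euler_solution ::
  "nat \<Rightarrow> (nat \<Rightarrow> 'a::real_vector \<Rightarrow> 'a) \<Rightarrow> (nat \<Rightarrow> nat \<Rightarrow> real) \<Rightarrow> nat \<Rightarrow> (nat \<Rightarrow> 'a) \<Rightarrow> bool" where
  "euler_solution d f v N y \<longleftrightarrow> (\<forall>k<N. y (Suc k) = y k + (\<Sum>\<mu><d. (v (Suc k) \<mu> - v k \<mu>) *\<^sub>R f \<mu> (y k)))"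

definition germ ::
  "nat \<Rightarrow> (nat \<Rightarrow> nat \<Rightarrow> 'a::real_vector) \<Rightarrow> (nat \<Rightarrow> nat \<Rightarrow> real) \<Rightarrow> nat \<Rightarrow> nat \<Rightarrow> 'a" where
  "germ d g v a b = (\<Sum>\<mu><d. (v b \<mu> - v a \<mu>) *\<^sub>R g \<mu> a)"

lemma germ_defect:
  "germ d g v s t - germ d g v s m - germ d g v m t = (\<Sum>\<mu><d. (v t \<mu> - v m \<mu>) *\<^sub>R (g \<mu> s - g \<mu> m))"
  by (simp add: germ_def sum_subtractf[symmetric] algebra_simps)

lemma norm_sum_scaleR_le:
  fixes u :: "nat \<Rightarrow> 'a::real_normed_vector"
  assumes "\<And>\<mu>. \<mu> < d \<Longrightarrow> norm (u \<mu>) \<le> K"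
  shows "norm (\<Sum>\<mu><d. r \<mu> *\<^sub>R u \<mu>) \<le> l1norm d r * K"
proof -
  have "norm (\<Sum>\<mu><d. r \<mu> *\<^sub>R u \<mu>) \<le> (\<Sum>\<mu><d. \<bar>r \<mu>\<bar> * K)"
    using assms by (intro order.trans[OF norm_sum] sum_mono) (auto intro: mult_left_mono)
  then show ?thesis by (simp add: l1norm_def sum_distrib_right)
qed

lemma norm_germ_le:
  fixes g :: "nat \<Rightarrow> nat \<Rightarrow> 'a::real_normed_vector"
  shows "(\<And>\<mu>. \<mu> < d \<Longrightarrow> norm (g \<mu> a) \<le> K) \<Longrightarrow> norm (germ d g v a b) \<le> l1norm d (\<lambda>\<mu>. v b \<mu> - v a \<mu>) * K"
  unfolding germ_def by (rule norm_sum_scaleR_le)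

lemma norm_germ_defect_le:
  fixes g :: "nat \<Rightarrow> nat \<Rightarrow> 'a::real_normed_vector"
  shows "(\<And>\<mu>. \<mu> < d \<Longrightarrow> norm (g \<mu> s - g \<mu> m) \<le> K) \<Longrightarrow>
    norm (germ d g v s t - germ d g v s m - germ d g v m t) \<le> l1norm d (\<lambda>\<mu>. v t \<mu> - v m \<mu>) * K"
  unfolding germ_defect by (rule norm_sum_scaleR_le)

lemma diff_eq_sum_steps:
  fixes y :: "nat \<Rightarrow> 'a::ab_group_add"
  shows "s \<le> t \<Longrightarrow> y t - y s = (\<Sum>j<t - s. y (s + Suc j) - y (s + j))"
  using sum_lessThan_telescope[of "\<lambda>j. y (s + j)" "t - s"] by simp

lemma euler_solution_step:
  "euler_solution d f v N y \<Longrightarrow> j < N \<Longrightarrow> y (Suc j) - y j = germ d (\<lambda>\<mu> a. f \<mu> (y a)) v j (Suc j)"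
  by (simp add: euler_solution_def germ_def)

lemma euler_solution_diff:
  assumes "euler_solution d f v N y" "s \<le> t" "t \<le> N"
  shows "y t - y s = (\<Sum>j<t - s. germ d (\<lambda>\<mu> a. f \<mu> (y a)) v (s + j) (s + Suc j))"
  using assms by (simp add: diff_eq_sum_steps[of s t y] euler_solution_step)

lemma exists_maximal_nat:
  fixes P :: "nat \<Rightarrow> bool"
  assumes "P k" "k \<le> N"
  obtains l where "k \<le> l" "l \<le> N" "P l" "l < N \<Longrightarrow> \<not> P (Suc l)"
proof -
  define l where "l = Max {l \<in> {k..N}. P l}"
  have "l \<in> {l \<in> {k..N}. P l}"
    unfolding l_def using assms by (intro Max_in) auto
  moreover have "\<not> P (Suc l)" if "l < N"
  proof
    assume "P (Suc l)"
    then have "Suc l \<le> Max {l \<in> {k..N}. P l}"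
      using that \<open>l \<in> _\<close> by (intro Max_ge) auto
    then show False by (simp add: l_def)
  qed
  ultimately show ?thesis using that by auto
qed

locale euler_scheme =
  fixes d :: nat and f :: "nat \<Rightarrow> 'a::real_normed_vector \<Rightarrow> 'a" and M p :: real and N :: nat
  assumes M_nonneg: "0 \<le> M" and p_ge_2: "2 \<le> p"
    and f_bounded: "\<And>\<mu> y. \<mu> < d \<Longrightarrow> norm (f \<mu> y) \<le> M"
    and f_lipschitz: "\<And>\<mu> y y'. \<mu> < d \<Longrightarrow> norm (f \<mu> y - f \<mu> y') \<le> M * norm (y - y')"
    and f_second_difference: "\<And>\<mu> a1 b1 a0 b0. \<mu> < d \<Longrightarrow> norm (f \<mu> a1 - f \<mu> b1 - f \<mu> a0 + f \<mu> b0)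
        \<le> M * norm ((a1 - b1) - (a0 - b0)) + M * norm (a0 - b0) * (norm (a1 - a0) + norm (b1 - b0))"
begin

abbreviation \<omega> :: "(nat \<Rightarrow> nat \<Rightarrow> real) \<Rightarrow> nat \<Rightarrow> nat \<Rightarrow> real" where
  "\<omega> \<equiv> ts_control d p"

lemma p_pos: "0 < p"
  using p_ge_2 by simp

lemma increment_le_control: "a \<le> b \<Longrightarrow> l1norm d (\<lambda>\<mu>. v b \<mu> - v a \<mu>) \<le> \<omega> v a b powr (1 / p)"
  using p_pos by (rule l1norm_le_ts_control)

lemma control_root_mono: "k \<le> a \<Longrightarrow> a \<le> b \<Longrightarrow> b \<le> l \<Longrightarrow> \<omega> v a b powr (1 / p) \<le> \<omega> v k l powr (1 / p)"
  using p_pos by (intro control_powr_mono control_ts_control) auto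

lemma norm_solution_germ_defect_le:
  assumes "norm (y s - y m) \<le> K"
  shows "norm (germ d (\<lambda>\<mu> a. f \<mu> (y a)) v s t - germ d (\<lambda>\<mu> a. f \<mu> (y a)) v s m
      - germ d (\<lambda>\<mu> a. f \<mu> (y a)) v m t) \<le> l1norm d (\<lambda>\<mu>. v t \<mu> - v m \<mu>) * (M * K)"
  using f_lipschitz mult_left_mono[OF assms M_nonneg] by (intro norm_germ_defect_le) (meson order.trans)

lemma euler_increment_le:
  assumes y: "euler_solution d f v N y" and "l \<le> N"
    and small: "M * \<omega> v k l powr (1 / p) \<le> \<eta>" and \<eta>: "2 * CpN p N * \<eta> \<le> 1"
  shows "k \<le> s \<Longrightarrow> s \<le> t \<Longrightarrow> t \<le> l \<Longrightarrow> norm (y t - y s) \<le> 2 * M * \<omega> v s t powr (1 / p)"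
proof (induction "t - s" arbitrary: s t rule: less_induct)
  case less
  let ?\<Xi> = "germ d (\<lambda>\<mu> a. f \<mu> (y a)) v"
  define P where "P = M * \<omega> v s t powr (1 / p)"
  have "P \<le> \<eta>"
    using less.prems small mult_left_mono[OF control_root_mono[of k s t l v] M_nonneg] by (simp add: P_def)
  then have "2 * CpN p N * P \<le> 1"
    using \<eta> mult_left_mono[of P \<eta> "2 * CpN p N"] CpN_nonneg[of p N] by simp
  moreover have "0 \<le> P"
    using M_nonneg by (simp add: P_def)
  ultimately have P: "0 \<le> P" "P * (2 * CpN p N * P) \<le> P"
    by (simp_all add: mult_left_le)
  have defect: "norm (?\<Xi> s' t' - ?\<Xi> s' m - ?\<Xi> m t') \<le> (2 * M * M) * \<omega> v s' t' powr (2 / p)"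
    if "s \<le> s'" "s' < m" "m < t'" "t' \<le> t" for s' m t'
  proof -
    have "norm (y m - y s') \<le> 2 * M * \<omega> v s' m powr (1 / p)"
      using less.hyps[of m s'] that less.prems by auto
    also have "\<dots> \<le> 2 * M * \<omega> v s' t' powr (1 / p)"
      using that M_nonneg by (intro mult_left_mono control_root_mono) auto
    finally have "norm (?\<Xi> s' t' - ?\<Xi> s' m - ?\<Xi> m t')
        \<le> l1norm d (\<lambda>\<mu>. v t' \<mu> - v m \<mu>) * (M * (2 * M * \<omega> v s' t' powr (1 / p)))"
      by (intro norm_solution_germ_defect_le) (simp add: norm_minus_commute)
    also have "\<dots> \<le> \<omega> v s' t' powr (1 / p) * (M * (2 * M * \<omega> v s' t' powr (1 / p)))"
      using that M_nonneg increment_le_control[of m t' v] control_root_mono[of s' m t' t' v]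
      by (intro mult_right_mono) auto
    finally show ?thesis by (simp add: powr_add[symmetric] mult_ac)
  qed
  have "norm (y t - y s) \<le> P + 2 * CpN p N * P * P" if "s < t"
  proof -
    have "norm ((\<Sum>j<t - s. ?\<Xi> (s + j) (s + Suc j)) - ?\<Xi> s t) \<le> CpN p N * (2 * M * M) * \<omega> v s t powr (2 / p)"
      using sewing_bound[OF control_ts_control, where \<theta> = "2 / p" and A = "2 * M * M", OF _ _ defect]
        that less.prems assms(2) p_pos M_nonneg by (simp add: CpN_def)
    also have "\<dots> = 2 * CpN p N * P * P"
      by (simp add: P_def powr_add[symmetric] mult_ac)
    finally show ?thesis
      using euler_solution_diff[OF y, of s t] norm_germ_le[of d "\<lambda>\<mu> a. f \<mu> (y a)" s M v t] f_bounded
        mult_right_mono[OF increment_le_control[of s t v] M_nonneg] that less.prems assms(2)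
        norm_triangle_ineq[of "?\<Xi> s t" "(\<Sum>j<t - s. ?\<Xi> (s + j) (s + Suc j)) - ?\<Xi> s t"]
      by (simp add: P_def mult.commute)
  qed
  then show ?case
    using less.prems P by (cases "s = t") (auto simp: P_def algebra_simps)
qed

lemma sewing_bound_CpN:
  fixes \<Xi> :: "nat \<Rightarrow> nat \<Rightarrow> 'b::real_normed_vector"
  assumes "control \<omega>1" "control \<omega>2" "0 \<le> A" "0 \<le> B"
    and "\<And>s m t. a \<le> s \<Longrightarrow> s < m \<Longrightarrow> m < t \<Longrightarrow> t \<le> b \<Longrightarrow>
        norm (\<Xi> s t - \<Xi> s m - \<Xi> m t) \<le> A * \<omega>1 s t powr (2 / p) + B * \<omega>2 s t powr (2 / p)"
    and "a < b" "b \<le> N"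
  shows "norm ((\<Sum>j<b - a. \<Xi> (a + j) (a + Suc j)) - \<Xi> a b)
    \<le> 2 * CpN p N * (A * \<omega>1 a b powr (2 / p) + B * \<omega>2 a b powr (2 / p))"
  using sewing_bound_two_controls[OF assms(1,2) _ _ assms(3-6), of N] assms(7) p_ge_2
  by (simp add: CpN_def mult_ac)

lemma root_mult_eq_sqrt_powr: "0 \<le> a \<Longrightarrow> 0 \<le> b \<Longrightarrow> a powr (1 / p) * b powr (1 / p) = sqrt (a * b) powr (2 / p)"
  by (simp add: powr_mult[symmetric] powr_half_sqrt[symmetric] powr_powr)

context
  fixes x x' :: "nat \<Rightarrow> 'a" and w w' :: "nat \<Rightarrow> nat \<Rightarrow> real"
  assumes x: "euler_solution d f w N x" and x': "euler_solution d f w' N x'"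
begin

abbreviation \<Omega> :: "nat \<Rightarrow> nat \<Rightarrow> real" where
  "\<Omega> a b \<equiv> \<omega> w a b + \<omega> w' a b"

abbreviation \<epsilon> :: "nat \<Rightarrow> nat \<Rightarrow> real" where
  "\<epsilon> \<equiv> \<omega> (\<lambda>j \<mu>. w j \<mu> - w' j \<mu>)"

lemma control_\<Omega>: "control \<Omega>"
  by (intro control_add control_ts_control)

lemma \<Omega>_root_mono: "k' \<le> a \<Longrightarrow> a \<le> b \<Longrightarrow> b \<le> l' \<Longrightarrow> \<Omega> a b powr (1 / p) \<le> \<Omega> k' l' powr (1 / p)"
  using p_pos by (intro control_powr_mono[OF control_\<Omega>]) auto

lemma control_root_le_\<Omega>: "\<omega> w a b powr (1 / p) \<le> \<Omega> a b powr (1 / p)" "\<omega> w' a b powr (1 / p) \<le> \<Omega> a b powr (1 / p)"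
proof -
  have "\<omega> w a b \<le> \<Omega> a b" "\<omega> w' a b \<le> \<Omega> a b"
    using control_nonneg[OF control_ts_control, of d p w a b] control_nonneg[OF control_ts_control, of d p w' a b]
    by linarith+
  then show "\<omega> w a b powr (1 / p) \<le> \<Omega> a b powr (1 / p)" "\<omega> w' a b powr (1 / p) \<le> \<Omega> a b powr (1 / p)"
    using p_pos by (auto intro!: powr_mono2 control_nonneg[OF control_ts_control])
qed

lemma control_geometric_mean_\<Omega>_\<epsilon>: "control (\<lambda>a b. sqrt (\<Omega> a b * \<epsilon> a b))"
  by (intro control_geometric_mean control_\<Omega> control_ts_control)

abbreviation \<Xi>1 :: "nat \<Rightarrow> nat \<Rightarrow> 'a" where
  "\<Xi>1 \<equiv> germ d (\<lambda>\<mu> a. f \<mu> (x a) - f \<mu> (x' a)) w"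

abbreviation \<Xi>2 :: "nat \<Rightarrow> nat \<Rightarrow> 'a" where
  "\<Xi>2 \<equiv> germ d (\<lambda>\<mu> a. f \<mu> (x' a)) (\<lambda>j \<mu>. w j \<mu> - w' j \<mu>)"

lemma difference_eq_sum_germs:
  assumes "s \<le> t" "t \<le> N"
  shows "(x t - x' t) - (x s - x' s)
    = (\<Sum>j<t - s. \<Xi>1 (s + j) (s + Suc j)) + (\<Sum>j<t - s. \<Xi>2 (s + j) (s + Suc j))"
proof -
  have "(x (Suc j) - x' (Suc j)) - (x j - x' j) = \<Xi>1 j (Suc j) + \<Xi>2 j (Suc j)" if "j < N" for j
    using euler_solution_step[OF x that] euler_solution_step[OF x' that]
    by (simp add: germ_def sum_subtractf[symmetric] sum.distrib[symmetric] algebra_simps)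
  then show ?thesis
    using assms by (simp add: diff_eq_sum_steps[of s t "\<lambda>j. x j - x' j"] sum.distrib[symmetric])
qed

lemma norm_\<Xi>1_le:
  assumes Z: "norm (x s - x' s) \<le> Z" and "s \<le> t"
  shows "norm (\<Xi>1 s t) \<le> Z * (M * \<Omega> s t powr (1 / p))"
proof -
  have "norm (f \<mu> (x s) - f \<mu> (x' s)) \<le> M * Z" if "\<mu> < d" for \<mu>
    using f_lipschitz[OF that] mult_left_mono[OF Z M_nonneg] by (meson order.trans)
  then have "norm (\<Xi>1 s t) \<le> l1norm d (\<lambda>\<mu>. w t \<mu> - w s \<mu>) * (M * Z)"
    by (rule norm_germ_le)
  also have "\<dots> \<le> \<Omega> s t powr (1 / p) * (M * Z)"
    using increment_le_control[of s t w] control_root_le_\<Omega>(1)[of s t] assms M_nonneg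
      order.trans[OF norm_ge_zero Z]
    by (intro mult_right_mono) auto
  finally show ?thesis by (simp add: mult_ac)
qed

lemma norm_\<Xi>2_le:
  assumes "s \<le> t"
  shows "norm (\<Xi>2 s t) \<le> M * \<epsilon> s t powr (1 / p)"
proof -
  have "norm (\<Xi>2 s t) \<le> l1norm d (\<lambda>\<mu>. (w t \<mu> - w' t \<mu>) - (w s \<mu> - w' s \<mu>)) * M"
    by (rule norm_germ_le) (simp add: f_bounded)
  also have "\<dots> \<le> \<epsilon> s t powr (1 / p) * M"
    using increment_le_control[OF assms, of "\<lambda>j \<mu>. w j \<mu> - w' j \<mu>"] M_nonneg by (rule mult_right_mono)
  finally show ?thesis by (simp add: mult.commute)
qed

context
  fixes k l :: nat and \<eta> :: real
  assumes kl: "k \<le> l" "l \<le> N"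
    and small: "M * \<Omega> k l powr (1 / p) \<le> \<eta>"
    and \<eta>: "12 * CpN p N * \<eta> \<le> 1"
begin

lemma solution_increments_le:
  assumes "k \<le> a" "a \<le> b" "b \<le> l"
  shows "norm (x b - x a) \<le> 2 * M * \<Omega> a b powr (1 / p)" "norm (x' b - x' a) \<le> 2 * M * \<Omega> a b powr (1 / p)"
proof -
  have "0 \<le> \<eta>"
    using small M_nonneg by (meson mult_nonneg_nonneg order_trans powr_ge_zero)
  then have \<eta>': "2 * CpN p N * \<eta> \<le> 1"
    using \<eta> mult_nonneg_nonneg[OF CpN_nonneg] by fastforce
  have "M * \<omega> w k l powr (1 / p) \<le> \<eta>" "M * \<omega> w' k l powr (1 / p) \<le> \<eta>"
    using small mult_left_mono[OF control_root_le_\<Omega>(1) M_nonneg, of k l]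
      mult_left_mono[OF control_root_le_\<Omega>(2) M_nonneg, of k l] by linarith+
  then have "norm (x b - x a) \<le> 2 * M * \<omega> w a b powr (1 / p)" "norm (x' b - x' a) \<le> 2 * M * \<omega> w' a b powr (1 / p)"
    using euler_increment_le[OF x kl(2) _ \<eta>'] euler_increment_le[OF x' kl(2) _ \<eta>'] assms by auto
  moreover have "0 \<le> 2 * M" using M_nonneg by simp
  ultimately show "norm (x b - x a) \<le> 2 * M * \<Omega> a b powr (1 / p)" "norm (x' b - x' a) \<le> 2 * M * \<Omega> a b powr (1 / p)"
    using mult_left_mono[OF control_root_le_\<Omega>(1), of "2 * M" a b]
      mult_left_mono[OF control_root_le_\<Omega>(2), of "2 * M" a b] by linarith+
qed

lemma norm_defect_\<Xi>1_le:
  assumes Z: "\<And>j. k \<le> j \<Longrightarrow> j \<le> l \<Longrightarrow> norm (x j - x' j) \<le> Z"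
    and stm: "k \<le> s" "s < m" "m < t" "t \<le> l"
    and zm: "norm ((x m - x' m) - (x s - x' s)) \<le> 2 * M * Z * \<Omega> s m powr (1 / p) + 2 * M * \<epsilon> s m powr (1 / p)"
  shows "norm (\<Xi>1 s t - \<Xi>1 s m - \<Xi>1 m t)
    \<le> (6 * M * M * Z) * \<Omega> s t powr (2 / p) + (2 * M * M) * sqrt (\<Omega> s t * \<epsilon> s t) powr (2 / p)"
proof -
  define r\<Omega> where "r\<Omega> = \<Omega> s t powr (1 / p)"
  define r\<epsilon> where "r\<epsilon> = \<epsilon> s t powr (1 / p)"
  have "norm (x s - x' s) \<le> Z" using Z stm by simp
  then have Z0: "0 \<le> Z" by (meson norm_ge_zero order.trans)
  have "2 * M * Z * \<Omega> s m powr (1 / p) \<le> 2 * M * Z * r\<Omega>" "2 * M * \<epsilon> s m powr (1 / p) \<le> 2 * M * r\<epsilon>"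
    using stm M_nonneg Z0 unfolding r\<Omega>_def r\<epsilon>_def
    by (intro mult_left_mono \<Omega>_root_mono control_root_mono; simp)+
  then have z: "norm ((x m - x' m) - (x s - x' s)) \<le> 2 * M * Z * r\<Omega> + 2 * M * r\<epsilon>"
    using zm by linarith
  have "2 * M * \<Omega> s m powr (1 / p) \<le> 2 * M * r\<Omega>"
    using stm M_nonneg unfolding r\<Omega>_def by (intro mult_left_mono \<Omega>_root_mono) auto
  then have xx: "norm (x m - x s) + norm (x' m - x' s) \<le> 4 * M * r\<Omega>"
    using solution_increments_le[of s m] stm by fastforce
  have "norm (f \<mu> (x s) - f \<mu> (x' s) - (f \<mu> (x m) - f \<mu> (x' m))) \<le> M * (6 * M * Z * r\<Omega> + 2 * M * r\<epsilon>)"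
    if "\<mu> < d" for \<mu>
  proof -
    have "norm (f \<mu> (x s) - f \<mu> (x' s) - (f \<mu> (x m) - f \<mu> (x' m)))
        \<le> M * norm ((x s - x' s) - (x m - x' m)) + M * norm (x m - x' m) * (norm (x s - x m) + norm (x' s - x' m))"
      using f_second_difference[OF that, of "x s" "x' s" "x m" "x' m"] by (simp add: algebra_simps)
    also have "\<dots> \<le> M * (2 * M * Z * r\<Omega> + 2 * M * r\<epsilon>) + M * Z * (4 * M * r\<Omega>)"
      using z xx Z[of m] stm M_nonneg Z0
      by (intro add_mono mult_left_mono mult_mono) (auto simp: norm_minus_commute)
    finally show ?thesis by (simp add: algebra_simps)
  qed
  then have "norm (\<Xi>1 s t - \<Xi>1 s m - \<Xi>1 m t) \<le> l1norm d (\<lambda>\<mu>. w t \<mu> - w m \<mu>) * (M * (6 * M * Z * r\<Omega> + 2 * M * r\<epsilon>))"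
    by (intro norm_germ_defect_le) auto
  also have "\<dots> \<le> r\<Omega> * (M * (6 * M * Z * r\<Omega> + 2 * M * r\<epsilon>))"
    using increment_le_control[of m t w] \<Omega>_root_mono[of s m t t] control_root_le_\<Omega>(1)[of m t] stm M_nonneg Z0
    unfolding r\<Omega>_def r\<epsilon>_def by (intro mult_right_mono) auto
  also have "\<dots> = (6 * M * M * Z) * (r\<Omega> * r\<Omega>) + (2 * M * M) * (r\<Omega> * r\<epsilon>)"
    by (simp add: algebra_simps)
  also have "r\<Omega> * r\<Omega> = \<Omega> s t powr (2 / p)"
    by (simp add: r\<Omega>_def powr_add[symmetric])
  also have "r\<Omega> * r\<epsilon> = sqrt (\<Omega> s t * \<epsilon> s t) powr (2 / p)"
    unfolding r\<Omega>_def r\<epsilon>_def by (intro root_mult_eq_sqrt_powr control_nonneg control_\<Omega> control_ts_control)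
  finally show ?thesis .
qed

lemma norm_defect_\<Xi>2_le:
  assumes "k \<le> s" "s < m" "m < t" "t \<le> l"
  shows "norm (\<Xi>2 s t - \<Xi>2 s m - \<Xi>2 m t) \<le> (2 * M * M) * sqrt (\<Omega> s t * \<epsilon> s t) powr (2 / p)"
proof -
  have "M * (2 * M * \<Omega> s m powr (1 / p)) \<le> M * (2 * M * \<Omega> s t powr (1 / p))"
    using assms M_nonneg by (intro mult_left_mono \<Omega>_root_mono) auto
  then have "norm (f \<mu> (x' s) - f \<mu> (x' m)) \<le> M * (2 * M * \<Omega> s t powr (1 / p))" if "\<mu> < d" for \<mu>
    using f_lipschitz[OF that, of "x' s" "x' m"] mult_left_mono[OF solution_increments_le(2)[of s m] M_nonneg]
      assms by (simp add: norm_minus_commute)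
  then have "norm (\<Xi>2 s t - \<Xi>2 s m - \<Xi>2 m t)
      \<le> l1norm d (\<lambda>\<mu>. (w t \<mu> - w' t \<mu>) - (w m \<mu> - w' m \<mu>)) * (M * (2 * M * \<Omega> s t powr (1 / p)))"
    by (intro norm_germ_defect_le) auto
  also have "\<dots> \<le> \<epsilon> s t powr (1 / p) * (M * (2 * M * \<Omega> s t powr (1 / p)))"
    using increment_le_control[of m t "\<lambda>j \<mu>. w j \<mu> - w' j \<mu>"]
      control_root_mono[of s m t t "\<lambda>j \<mu>. w j \<mu> - w' j \<mu>"] assms M_nonneg
    by (intro mult_right_mono) auto
  finally show ?thesis
    using root_mult_eq_sqrt_powr[OF control_nonneg[OF control_\<Omega>] control_nonneg[OF control_ts_control], of s t]
    by (simp add: mult_ac)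
qed

lemma norm_defect_difference_le:
  assumes Z: "\<And>j. k \<le> j \<Longrightarrow> j \<le> l \<Longrightarrow> norm (x j - x' j) \<le> Z"
    and stm: "k \<le> s" "s < m" "m < t" "t \<le> l"
    and zm: "norm ((x m - x' m) - (x s - x' s)) \<le> 2 * M * Z * \<Omega> s m powr (1 / p) + 2 * M * \<epsilon> s m powr (1 / p)"
  shows "norm ((\<Xi>1 s t + \<Xi>2 s t) - (\<Xi>1 s m + \<Xi>2 s m) - (\<Xi>1 m t + \<Xi>2 m t))
    \<le> (6 * M * M * Z) * \<Omega> s t powr (2 / p) + (4 * M * M) * sqrt (\<Omega> s t * \<epsilon> s t) powr (2 / p)"
proof -
  have "(\<Xi>1 s t + \<Xi>2 s t) - (\<Xi>1 s m + \<Xi>2 s m) - (\<Xi>1 m t + \<Xi>2 m t)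
      = (\<Xi>1 s t - \<Xi>1 s m - \<Xi>1 m t) + (\<Xi>2 s t - \<Xi>2 s m - \<Xi>2 m t)"
    by (simp add: algebra_simps)
  then have "norm ((\<Xi>1 s t + \<Xi>2 s t) - (\<Xi>1 s m + \<Xi>2 s m) - (\<Xi>1 m t + \<Xi>2 m t))
      \<le> norm (\<Xi>1 s t - \<Xi>1 s m - \<Xi>1 m t) + norm (\<Xi>2 s t - \<Xi>2 s m - \<Xi>2 m t)"
    by (simp only: norm_triangle_ineq)
  also have "\<dots> \<le> ((6 * M * M * Z) * \<Omega> s t powr (2 / p) + (2 * M * M) * sqrt (\<Omega> s t * \<epsilon> s t) powr (2 / p))
      + (2 * M * M) * sqrt (\<Omega> s t * \<epsilon> s t) powr (2 / p)"
    using stm by (intro add_mono norm_defect_\<Xi>1_le[OF Z _ _ _ _ zm] norm_defect_\<Xi>2_le) auto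
  finally show ?thesis by (simp add: algebra_simps)
qed

lemma difference_increment_le:
  assumes Z: "\<And>j. k \<le> j \<Longrightarrow> j \<le> l \<Longrightarrow> norm (x j - x' j) \<le> Z"
  shows "k \<le> s \<Longrightarrow> s \<le> t \<Longrightarrow> t \<le> l \<Longrightarrow>
    norm ((x t - x' t) - (x s - x' s)) \<le> 2 * M * Z * \<Omega> s t powr (1 / p) + 2 * M * \<epsilon> s t powr (1 / p)"
proof (induction "t - s" arbitrary: s t rule: less_induct)
  case less
  let ?\<Xi> = "\<lambda>a b. \<Xi>1 a b + \<Xi>2 a b"
  define P where "P = M * \<Omega> s t powr (1 / p)"
  define Q where "Q = M * \<epsilon> s t powr (1 / p)"
  have Z0: "0 \<le> Z" using Z[of k] kl by (meson norm_ge_zero order.trans order_refl)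
  have PQ: "0 \<le> P" "0 \<le> Q" using M_nonneg by (simp_all add: P_def Q_def)
  have "P \<le> \<eta>"
    using small less.prems mult_left_mono[OF \<Omega>_root_mono[of k s t l] M_nonneg] by (simp add: P_def)
  then have CP: "12 * CpN p N * P \<le> 1"
    using \<eta> mult_left_mono[of P \<eta> "12 * CpN p N"] CpN_nonneg[of p N] by simp
  have "norm (?\<Xi> s' t' - ?\<Xi> s' m - ?\<Xi> m t')
      \<le> (6 * M * M * Z) * \<Omega> s' t' powr (2 / p) + (4 * M * M) * sqrt (\<Omega> s' t' * \<epsilon> s' t') powr (2 / p)"
    if "s \<le> s'" "s' < m" "m < t'" "t' \<le> t" for s' m t'
    using less.hyps[of m s'] less.prems that by (intro norm_defect_difference_le[OF Z]) auto
  then have "norm ((\<Sum>j<t - s. ?\<Xi> (s + j) (s + Suc j)) - ?\<Xi> s t)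
      \<le> 2 * CpN p N * ((6 * M * M * Z) * \<Omega> s t powr (2 / p) + (4 * M * M) * sqrt (\<Omega> s t * \<epsilon> s t) powr (2 / p))"
    if "s < t"
    using that less.prems kl M_nonneg Z0
    by (intro sewing_bound_CpN[OF control_\<Omega> control_geometric_mean_\<Omega>_\<epsilon>]) auto
  also have "\<dots> = 2 * CpN p N * (6 * Z * (P * P) + 4 * (P * Q))"
    using root_mult_eq_sqrt_powr[of "\<Omega> s t" "\<epsilon> s t"] control_nonneg[OF control_\<Omega>, of s t]
      control_nonneg[OF control_ts_control, of d p "\<lambda>j \<mu>. w j \<mu> - w' j \<mu>" s t]
    by (simp add: P_def Q_def powr_add[symmetric] mult_ac)
  finally have "norm ((x t - x' t) - (x s - x' s)) \<le> Z * P + Q + 2 * CpN p N * (6 * Z * (P * P) + 4 * (P * Q))"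
    if "s < t"
    using that difference_eq_sum_germs[of s t] less.prems kl norm_\<Xi>1_le[of s Z t] norm_\<Xi>2_le[of s t] Z[of s]
      norm_triangle_ineq[of "?\<Xi> s t" "(\<Sum>j<t - s. ?\<Xi> (s + j) (s + Suc j)) - ?\<Xi> s t"]
      norm_triangle_ineq[of "\<Xi>1 s t" "\<Xi>2 s t"]
    by (simp add: sum.distrib P_def Q_def mult_ac)
  also have "\<dots> = Z * P * (1 + 12 * CpN p N * P) + Q * (1 + 8 * CpN p N * P)"
    by (simp add: algebra_simps)
  also have "\<dots> \<le> Z * P * 2 + Q * 2"
    using CP Z0 PQ CpN_nonneg by (intro add_mono mult_left_mono) auto
  finally have "s < t \<Longrightarrow> norm ((x t - x' t) - (x s - x' s)) \<le> Z * P * 2 + Q * 2" .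
  then have "norm ((x t - x' t) - (x s - x' s)) \<le> Z * P * 2 + Q * 2"
    using less.prems Z0 PQ by (cases "s = t") auto
  then show ?case by (simp add: P_def Q_def mult_ac)
qed

lemma local_difference_le:
  assumes "\<eta> \<le> 1 / 4" "k \<le> m" "m \<le> l"
  shows "norm (x m - x' m) \<le> 2 * norm (x k - x' k) + 4 * M * \<epsilon> k l powr (1 / p)"
proof -
  \<comment> \<open>with \<open>Z\<close> the maximum of \<open>|x - x'|\<close> on \<open>[k, l]\<close>, the term \<open>2 M Z \<Omega>(k,j)^(1/p) \<le> Z/2\<close> is absorbed\<close>
  define Z where "Z = Max ((\<lambda>j. norm (x j - x' j)) ` {k..l})"
  have Z: "norm (x j - x' j) \<le> Z" if "k \<le> j" "j \<le> l" for j
    unfolding Z_def using that by (intro Max_ge) auto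
  have "Z \<in> (\<lambda>j. norm (x j - x' j)) ` {k..l}"
    unfolding Z_def using kl by (intro Max_in) auto
  then obtain j where j: "k \<le> j" "j \<le> l" "Z = norm (x j - x' j)"
    by auto
  have Z0: "0 \<le> Z" using j by simp
  have "M * \<Omega> k j powr (1 / p) \<le> \<eta>"
    using small mult_left_mono[OF \<Omega>_root_mono[of k k j l] M_nonneg] j by simp
  then have "(2 * Z) * (M * \<Omega> k j powr (1 / p)) \<le> (2 * Z) * (1 / 4)"
    using assms(1) Z0 by (intro mult_left_mono) auto
  then have "2 * M * Z * \<Omega> k j powr (1 / p) \<le> Z / 2"
    by (simp add: mult_ac)
  moreover have "2 * M * \<epsilon> k j powr (1 / p) \<le> 2 * M * \<epsilon> k l powr (1 / p)"
    using j M_nonneg by (intro mult_left_mono control_root_mono) auto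
  moreover have "Z \<le> norm (x k - x' k) + norm ((x j - x' j) - (x k - x' k))"
    using j norm_triangle_ineq[of "x k - x' k" "(x j - x' j) - (x k - x' k)"] by simp
  ultimately have "Z \<le> 2 * norm (x k - x' k) + 4 * M * \<epsilon> k l powr (1 / p)"
    using difference_increment_le[OF Z, of k j] j kl by simp
  then show ?thesis
    using Z[of m] assms by simp
qed

end


lemma difference_step_le:
  assumes "k \<le> l" "l < N" "0 < \<eta>" "\<eta> < M * \<Omega> k (Suc l) powr (1 / p)"
    and B: "\<epsilon> l (Suc l) powr (1 / p) \<le> B"
  shows "5 * (norm (x (Suc l) - x' (Suc l)) + M * B)
    \<le> exp (growth_rate p \<eta> * (M powr p * \<Omega> k (Suc l))) * (norm (x l - x' l) + M * B)"
proof -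
  define y where "y = M * \<Omega> l (Suc l) powr (1 / p)"
  define q where "q = M * \<Omega> k (Suc l) powr (1 / p)"
  have y: "0 \<le> y" "y \<le> q"
    using M_nonneg mult_left_mono[OF \<Omega>_root_mono[of k l "Suc l" "Suc l"] M_nonneg] assms
    by (auto simp: y_def q_def)
  have step: "x (Suc l) - x' (Suc l) = (x l - x' l) + \<Xi>1 l (Suc l) + \<Xi>2 l (Suc l)"
    using difference_eq_sum_germs[of l "Suc l"] assms by (simp add: algebra_simps)
  have "norm (x (Suc l) - x' (Suc l)) \<le> norm (x l - x' l) + norm (\<Xi>1 l (Suc l)) + norm (\<Xi>2 l (Suc l))"
    unfolding step using norm_triangle_ineq[of "(x l - x' l) + \<Xi>1 l (Suc l)" "\<Xi>2 l (Suc l)"]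
      norm_triangle_ineq[of "x l - x' l" "\<Xi>1 l (Suc l)"] by linarith
  also have "\<dots> \<le> norm (x l - x' l) + y * norm (x l - x' l) + M * B"
    using norm_\<Xi>1_le[of l "norm (x l - x' l)" "Suc l"] norm_\<Xi>2_le[of l "Suc l"]
      mult_left_mono[OF B M_nonneg] by (simp add: y_def mult_ac)
  finally have "norm (x (Suc l) - x' (Suc l)) \<le> norm (x l - x' l) + y * norm (x l - x' l) + M * B" .
  moreover have "0 \<le> y * (M * B)"
    using y M_nonneg order.trans[OF powr_ge_zero B] by simp
  ultimately have "5 * (norm (x (Suc l) - x' (Suc l)) + M * B)
      \<le> 10 * norm (x l - x' l) + 5 * (y * norm (x l - x' l)) + 10 * (M * B) + 5 * (y * (M * B))"
    using norm_ge_zero[of "x l - x' l"] by argo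
  also have "\<dots> = (5 * (2 + y)) * (norm (x l - x' l) + M * B)"
    by (simp add: algebra_simps)
  also have "\<dots> \<le> exp (growth_rate p \<eta> * q powr p) * (norm (x l - x' l) + M * B)"
    using five_mul_two_add_le_exp[of \<eta> q y p] y assms p_ge_2 M_nonneg order.trans[OF powr_ge_zero B]
    by (intro mult_right_mono) (auto simp: q_def)
  also have "q powr p = M powr p * \<Omega> k (Suc l)"
    using M_nonneg p_pos control_nonneg[OF control_\<Omega>] by (simp add: q_def powr_mult powr_powr)
  finally show ?thesis .
qed


lemma difference_on_interval_le:
  assumes "k \<le> j" "j \<le> l" "l \<le> N" "M * \<Omega> k l powr (1 / p) \<le> \<eta>" "12 * CpN p N * \<eta> \<le> 1" "\<eta> \<le> 1 / 4"
    and B: "\<epsilon> k l powr (1 / p) \<le> B"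
  shows "norm (x j - x' j) + M * B \<le> 5 * (norm (x k - x' k) + M * B)"
proof -
  have "norm (x j - x' j) \<le> 2 * norm (x k - x' k) + 4 * (M * \<epsilon> k l powr (1 / p))"
    using local_difference_le[of k l \<eta> j] assms by (simp add: mult.assoc)
  moreover have "M * \<epsilon> k l powr (1 / p) \<le> M * B"
    using B M_nonneg by (rule mult_left_mono)
  ultimately show ?thesis
    using norm_ge_zero[of "x k - x' k"] by argo
qed

lemma difference_across_interval_le:
  assumes "k \<le> l" "l < N" "0 < \<eta>" "12 * CpN p N * \<eta> \<le> 1" "\<eta> \<le> 1 / 4"
    and "M * \<Omega> k l powr (1 / p) \<le> \<eta>" "\<eta> < M * \<Omega> k (Suc l) powr (1 / p)"
    and B: "\<epsilon> k (Suc l) powr (1 / p) \<le> B"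
  shows "norm (x (Suc l) - x' (Suc l)) + M * B
    \<le> exp (growth_rate p \<eta> * (M powr p * \<Omega> k (Suc l))) * (norm (x k - x' k) + M * B)"
proof -
  define G where "G = exp (growth_rate p \<eta> * (M powr p * \<Omega> k (Suc l)))"
  define u where "u j = norm (x j - x' j) + M * B" for j
  have "\<epsilon> k l powr (1 / p) \<le> B" "\<epsilon> l (Suc l) powr (1 / p) \<le> B"
    using B control_root_mono[of k k l "Suc l" "\<lambda>j \<mu>. w j \<mu> - w' j \<mu>"]
      control_root_mono[of k l "Suc l" "Suc l" "\<lambda>j \<mu>. w j \<mu> - w' j \<mu>"] assms(1) by auto
  then have crossing: "5 * u (Suc l) \<le> G * u l" and local: "u l \<le> 5 * u k"
    using difference_step_le[of k l \<eta> B] difference_on_interval_le[of k l l \<eta> B] assms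
    by (simp_all add: G_def u_def)
  from local have "G * u l \<le> G * (5 * u k)"
    by (rule mult_left_mono) (simp add: G_def)
  then have "5 * u (Suc l) \<le> G * (5 * u k)"
    using crossing by linarith
  then have "5 * u (Suc l) \<le> 5 * (G * u k)"
    by (simp only: mult.left_commute[of G 5])
  then show ?thesis
    by (simp add: u_def G_def)
qed

lemma difference_le_exp:
  assumes \<eta>: "0 < \<eta>" "12 * CpN p N * \<eta> \<le> 1" "\<eta> \<le> 1 / 4"
  shows "\<epsilon> k N powr (1 / p) \<le> B \<Longrightarrow> k \<le> m \<Longrightarrow> m \<le> N \<Longrightarrow> norm (x m - x' m) + M * B
    \<le> 5 * exp (growth_rate p \<eta> * (M powr p * \<Omega> k N)) * (norm (x k - x' k) + M * B)"
proof (induction "N - k" arbitrary: k rule: less_induct)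
  case less
  define u where "u j = norm (x j - x' j) + M * B" for j
  define G where "G a b = exp (growth_rate p \<eta> * (M powr p * \<Omega> a b))" for a b
  have u: "0 \<le> u j" for j
    using M_nonneg order.trans[OF powr_ge_zero less.prems(1)] by (simp add: u_def)
  have G: "1 \<le> G a b" for a b
    using growth_rate_nonneg[OF \<eta>(1)] control_nonneg[OF control_\<Omega>] M_nonneg by (simp add: G_def)
  have B: "\<epsilon> a b powr (1 / p) \<le> B" if "k \<le> a" "a \<le> b" "b \<le> N" for a b
    using control_root_mono[OF that, of "\<lambda>j \<mu>. w j \<mu> - w' j \<mu>"] less.prems(1) by linarith
  have "M * \<Omega> k k powr (1 / p) \<le> \<eta>" "k \<le> N"
    using \<eta> less.prems by (simp_all add: ts_control_def pvar_pow_def)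
  \<comment> \<open>the greedy choice: \<open>l\<close> is the last point with \<open>[k, l]\<close> still \<open>\<eta>\<close>-small\<close>
  then obtain l where l: "k \<le> l" "l \<le> N" "M * \<Omega> k l powr (1 / p) \<le> \<eta>"
    and maximal: "l < N \<Longrightarrow> \<not> M * \<Omega> k (Suc l) powr (1 / p) \<le> \<eta>"
    by (rule exists_maximal_nat[where P = "\<lambda>l. M * \<Omega> k l powr (1 / p) \<le> \<eta>"]) blast
  have "u m \<le> G k N * (5 * u k)"
  proof (cases "m \<le> l")
    case True
    then have "u m \<le> 5 * u k"
      using difference_on_interval_le[of k m l \<eta> B] l \<eta> less.prems B[of k l] by (simp add: u_def)
    then show ?thesis
      using mult_right_mono[OF G[of k N] u[of k]] by simp
  next
    case False
    have "N - Suc l < N - k" "\<epsilon> (Suc l) N powr (1 / p) \<le> B"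
      using False less.prems l B by auto
    then have "u m \<le> 5 * G (Suc l) N * u (Suc l)"
      using less.hyps[of "Suc l"] False less.prems by (simp add: u_def G_def)
    also have "\<dots> \<le> 5 * G (Suc l) N * (G k (Suc l) * u k)"
      using difference_across_interval_le[of k l \<eta> B] False less.prems l maximal \<eta> B[of k "Suc l"]
        order.trans[OF zero_le_one G] by (intro mult_left_mono) (auto simp: u_def G_def not_le)
    also have "\<dots> = (G k (Suc l) * G (Suc l) N) * (5 * u k)"
      by (simp add: mult_ac)
    also have "G k (Suc l) * G (Suc l) N \<le> G k N"
      using control_superadditive[OF control_\<Omega>, of k "Suc l" N] False less.prems l
        growth_rate_nonneg[OF \<eta>(1)] M_nonneg
      by (simp add: G_def exp_add[symmetric] distrib_left[symmetric] mult_left_mono)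
    finally show ?thesis
      using u[of k] by (simp add: mult_right_mono)
  qed
  then show ?case by (simp add: u_def G_def algebra_simps)
qed

lemma difference_le_rp_norm:
  assumes "k \<le> N"
  shows "norm (x k - x' k) \<le> 2 * cpN' p N * exp (cpN p N * M powr p * (rp_norm d p w 0 N powr p + rp_norm d p w' 0 N powr p))
    * (norm (x 0 - x' 0) + M * rho_p d p N w w')"
proof -
  define \<eta> where "\<eta> = 1 / (12 * CpN p N + 4)"
  have \<eta>: "0 < \<eta>" "12 * CpN p N * \<eta> \<le> 1" "\<eta> \<le> 1 / 4"
    using CpN_nonneg[of p N] by (auto simp: \<eta>_def field_simps)
  have "norm (x k - x' k) \<le> norm (x k - x' k) + M * \<epsilon> 0 N powr (1 / p)"
    using M_nonneg by simp
  also have "\<dots> \<le> 5 * exp (growth_rate p \<eta> * (M powr p * \<Omega> 0 N)) * (norm (x 0 - x' 0) + M * \<epsilon> 0 N powr (1 / p))"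
    using difference_le_exp[OF \<eta>] assms by simp
  also have "\<dots> \<le> 2 * cpN' p N * exp (cpN p N * M powr p * \<Omega> 0 N) * (norm (x 0 - x' 0) + M * \<epsilon> 0 N powr (1 / p))"
    using five_le_cpN'[OF p_ge_2, of N] growth_rate_le_cpN[OF p_ge_2, of N] M_nonneg control_nonneg[OF control_\<Omega>]
    by (intro mult_right_mono mult_mono) (auto simp: \<eta>_def mult.assoc intro!: mult_right_mono)
  also have "\<dots> \<le> 2 * cpN' p N * exp (cpN p N * M powr p * (rp_norm d p w 0 N powr p + rp_norm d p w' 0 N powr p))
    * (norm (x 0 - x' 0) + M * rho_p d p N w w')"
  proof (rule mult_mono)
    have "\<Omega> 0 N \<le> rp_norm d p w 0 N powr p + rp_norm d p w' 0 N powr p"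
      using p_pos by (intro add_mono ts_control_le_rp_norm)
    then show "2 * cpN' p N * exp (cpN p N * M powr p * \<Omega> 0 N)
        \<le> 2 * cpN' p N * exp (cpN p N * M powr p * (rp_norm d p w 0 N powr p + rp_norm d p w' 0 N powr p))"
      using cpN_nonneg M_nonneg by (simp add: cpN'_def mult_left_mono)
    show "norm (x 0 - x' 0) + M * \<epsilon> 0 N powr (1 / p) \<le> norm (x 0 - x' 0) + M * rho_p d p N w w'"
      using ts_pvar_le_rho_p M_nonneg by (simp add: ts_pvar_eq_ts_control mult_left_mono)
  qed (simp_all add: cpN'_def M_nonneg)
  finally show ?thesis .
qed

end

end

section \<open>$C^3_b$ vector fields\<close>


lemma SUP_norm_le_C3b_norm:
  assumes "\<mu> < d"
  shows "(SUP x. norm (f \<mu> x)) \<le> C3b_norm d f Df DDf DDDf"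
    and "(SUP x. norm (Df \<mu> x)) \<le> C3b_norm d f Df DDf DDDf"
    and "(SUP x. norm (DDf \<mu> x)) \<le> C3b_norm d f Df DDf DDDf"
proof -
  let ?m = "Max {(SUP x. norm (f \<mu> x)), (SUP x. norm (Df \<mu> x)), (SUP x. norm (DDf \<mu> x)), (SUP x. norm (DDDf \<mu> x))}"
  have "?m \<le> C3b_norm d f Df DDf DDDf"
    unfolding C3b_norm_def using assms by (intro Max_ge) auto
  moreover have "(SUP x. norm (f \<mu> x)) \<le> ?m" "(SUP x. norm (Df \<mu> x)) \<le> ?m" "(SUP x. norm (DDf \<mu> x)) \<le> ?m"
    by (intro Max_ge; simp)+
  ultimately show "(SUP x. norm (f \<mu> x)) \<le> C3b_norm d f Df DDf DDDf"
    "(SUP x. norm (Df \<mu> x)) \<le> C3b_norm d f Df DDf DDDf" "(SUP x. norm (DDf \<mu> x)) \<le> C3b_norm d f Df DDf DDDf"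
    by linarith+
qed

lemma euler_scheme_C3b_norm:
  assumes "2 \<le> p" "1 \<le> d" and f: "\<And>\<mu>. \<mu> < d \<Longrightarrow> C3b_with (f \<mu>) (D1 \<mu>) (D2 \<mu>) (D3 \<mu>)"
  shows "euler_scheme d f (C3b_norm d f D1 D2 D3) p"
proof -
  let ?M = "C3b_norm d f D1 D2 D3"
  note SUP_le = SUP_norm_le_C3b_norm[where f = f and Df = D1 and DDf = D2 and DDDf = D3]
  have C: "\<forall>x. (f \<mu> has_derivative blinfun_apply (D1 \<mu> x)) (at x)"
    "\<forall>x. (D1 \<mu> has_derivative blinfun_apply (D2 \<mu> x)) (at x)"
    "bounded (range (f \<mu>))" "bounded (range (D1 \<mu>))" "bounded (range (D2 \<mu>))" if "\<mu> < d" for \<mu>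
    using f[OF that] by (simp_all add: C3b_with_def)
  have bounded: "norm (f \<mu> y) \<le> ?M" if "\<mu> < d" for \<mu> y
    using norm_le_SUP_norm[OF C(3)[OF that], of y] SUP_le(1)[OF that] by linarith
  have "norm (f \<mu> y - f \<mu> y') \<le> ?M * norm (y - y')" if "\<mu> < d" for \<mu> y y'
    using norm_diff_le_SUP_derivative[OF C(1)[OF that, THEN spec] C(4)[OF that], of y y']
      mult_right_mono[OF SUP_le(2)[OF that] norm_ge_zero, of "y - y'"] by linarith
  moreover have "norm (f \<mu> a1 - f \<mu> b1 - f \<mu> a0 + f \<mu> b0)
      \<le> ?M * norm ((a1 - b1) - (a0 - b0)) + ?M * norm (a0 - b0) * (norm (a1 - a0) + norm (b1 - b0))"
    if "\<mu> < d" for \<mu> a1 b1 a0 b0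
  proof -
    have "0 \<le> norm (a0 - b0) * (norm (a1 - a0) + norm (b1 - b0))"
      by simp
    then show ?thesis
      using norm_second_difference_le[OF C(1)[OF that, THEN spec] C(2)[OF that, THEN spec] C(4,5)[OF that],
          of a1 b1 a0 b0]
        mult_right_mono[OF SUP_le(2)[OF that] norm_ge_zero, of "(a1 - b1) - (a0 - b0)"]
        mult_right_mono[OF SUP_le(3)[OF that], of "norm (a0 - b0) * (norm (a1 - a0) + norm (b1 - b0))"]
      by (simp add: mult.assoc)
  qed
  moreover have "0 \<le> ?M"
    using bounded[of 0] assms(2) by (meson norm_ge_zero order.trans less_le_trans zero_less_one)
  ultimately show ?thesis
    using assms bounded by unfold_locales auto
qed

theorem theorem5p10:
  fixes p :: real and N d :: nat
    and f :: "nat \<Rightarrow> 'a::real_normed_vector \<Rightarrow> 'a"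
    and D1 :: "nat \<Rightarrow> 'a \<Rightarrow> 'a \<Rightarrow>\<^sub>L 'a"
    and D2 :: "nat \<Rightarrow> 'a \<Rightarrow> 'a \<Rightarrow>\<^sub>L ('a \<Rightarrow>\<^sub>L 'a)"
    and D3 :: "nat \<Rightarrow> 'a \<Rightarrow> 'a \<Rightarrow>\<^sub>L ('a \<Rightarrow>\<^sub>L ('a \<Rightarrow>\<^sub>L 'a))"
    and w w' :: "nat \<Rightarrow> nat \<Rightarrow> real"
    and \<xi> \<xi>' :: 'a
    and x x' :: "nat \<Rightarrow> 'a"
  assumes p: "2 \<le> p" "p < 3"
    and d: "1 \<le> d"
    and findim: "\<exists>B. finite B \<and> span B = (UNIV :: 'a set)"
    and nontriv: "\<exists>v::'a. v \<noteq> 0"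
    and f: "\<And>\<mu>. \<mu> < d \<Longrightarrow> C3b_with (f \<mu>) (D1 \<mu>) (D2 \<mu>) (D3 \<mu>)"
    and x0: "x 0 = \<xi>"
    and xstep: "\<And>k. k < N \<Longrightarrow> x (Suc k) = x k + (\<Sum>\<mu><d. (w (Suc k) \<mu> - w k \<mu>) *\<^sub>R f \<mu> (x k))"
    and x'0: "x' 0 = \<xi>'"
    and x'step: "\<And>k. k < N \<Longrightarrow> x' (Suc k) = x' k + (\<Sum>\<mu><d. (w' (Suc k) \<mu> - w' k \<mu>) *\<^sub>R f \<mu> (x' k))"
  shows "\<forall>k\<le>N. norm (x k - x' k) \<le>
     2 * cpN' p N * exp (cpN p N * (C3b_norm d f D1 D2 D3) powr p *
        ((rp_norm d p w 0 N) powr p + (rp_norm d p w' 0 N) powr p))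
     * (norm (\<xi> - \<xi>') + C3b_norm d f D1 D2 D3 * rho_p d p N w w')"
proof -
  interpret euler_scheme d f "C3b_norm d f D1 D2 D3" p N
    using p(1) d f by (rule euler_scheme_C3b_norm)
  have "euler_solution d f w N x" "euler_solution d f w' N x'"
    using xstep x'step by (simp_all add: euler_solution_def)
  then show ?thesis
    using difference_le_rp_norm x0 x'0 by blast
qed

end
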